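(* Let $R$ be a Noetherian commutative ring and let $I,J,K$ be ideals of $R$. Then there is an integer $t>0$ such that $$(J+I^nK):I = (J:I)+I^{n-1}K\quad\text{for every } n\geq t.$$
   Context: For ideals $A,B$ of $R$, $A:B=\{r\in R: rB\subseteq A\}$. *)

theory Defs
  imports "HOL-Algebra.Ideal_Product" "HOL-Algebra.Ring_Divisibility"
begin

definition ideal_colon :: "('a, 'b) ring_scheme \<Rightarrow> 'a set \<Rightarrow> 'a set \<Rightarrow> 'a set" where
  "ideal_colon R A B = {r \<in> carrier R. \<forall>b\<in>B. r \<otimes>\<^bsub>R\<^esub> b \<in> A}"

fun ideal_pow :: "('a, 'b) ring_scheme \<Rightarrow> 'a set \<Rightarrow> nat \<Rightarrow> 'a set" where
  "ideal_pow R I 0 = carrier R"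
| "ideal_pow R I (Suc n) = ideal_prod R I (ideal_pow R I n)"

end

theory Submission
  imports Defs "HOL-Algebra.Subrings" "HOL-Algebra.Generated_Rings"
begin

lemma (in ring) finsum_closed_in:
  assumes "A \<subseteq> carrier R" "\<zero> \<in> A" "\<And>x y. x \<in> A \<Longrightarrow> y \<in> A \<Longrightarrow> x \<oplus> y \<in> A"
    and "finite S" "\<And>i. i \<in> S \<Longrightarrow> f i \<in> A"
  shows "(\<Oplus>i\<in>S. f i) \<in> A"
  using assms(4,5)
proof (induction S rule: finite_induct)
  case (insert i S)
  then have "f \<in> S \<rightarrow> carrier R" "f i \<in> carrier R" using assms(1) by auto
  with insert show ?case by (simp add: assms(3))
qed (simp add: assms(2))

lemma (in ring) subring_finsum_closed:
  assumes "subring B R" "finite S" "\<And>i. i \<in> S \<Longrightarrow> f i \<in> B"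
  shows "(\<Oplus>i\<in>S. f i) \<in> B"
  using assms subringE(1,2,7)[OF assms(1)] by (intro finsum_closed_in) auto

lemma (in ring) ideal_finsum_closed:
  assumes "ideal A R" "finite S" "\<And>i. i \<in> S \<Longrightarrow> f i \<in> A"
  shows "(\<Oplus>i\<in>S. f i) \<in> A"
  using assms ideal.Icarr[OF assms(1)]
  by (intro finsum_closed_in) (auto simp: additive_subgroup.a_closed additive_subgroup.zero_closed ideal.axioms(1))

context ring
begin

lemma finsum_lincomb_zero:
  assumes "\<And>f. f \<in> F \<Longrightarrow> g f \<in> carrier R"
  shows "(\<Oplus>f\<in>F. \<zero> \<otimes> g f) = \<zero>"
proof -
  have "(\<Oplus>f\<in>F. \<zero> \<otimes> g f) = (\<Oplus>f\<in>F. \<zero>)"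
    using assms by (intro finsum_cong') auto
  then show ?thesis
    by simp
qed

lemma finsum_lincomb_add:
  assumes "\<And>f. f \<in> F \<Longrightarrow> c f \<in> carrier R" "\<And>f. f \<in> F \<Longrightarrow> d f \<in> carrier R"
    and "\<And>f. f \<in> F \<Longrightarrow> g f \<in> carrier R"
  shows "(\<Oplus>f\<in>F. c f \<otimes> g f) \<oplus> (\<Oplus>f\<in>F. d f \<otimes> g f) = (\<Oplus>f\<in>F. (c f \<oplus> d f) \<otimes> g f)"
proof -
  have "(\<Oplus>f\<in>F. c f \<otimes> g f) \<oplus> (\<Oplus>f\<in>F. d f \<otimes> g f) = (\<Oplus>f\<in>F. c f \<otimes> g f \<oplus> d f \<otimes> g f)"
    using assms by (intro finsum_addf[symmetric]) auto
  also have "\<dots> = (\<Oplus>f\<in>F. (c f \<oplus> d f) \<otimes> g f)"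
    using assms by (intro finsum_cong') (auto simp: l_distr)
  finally show ?thesis .
qed

lemma finsum_lincomb_smult:
  assumes "finite F" "r \<in> carrier R" "\<And>f. f \<in> F \<Longrightarrow> c f \<in> carrier R"
    and "\<And>f. f \<in> F \<Longrightarrow> g f \<in> carrier R"
  shows "r \<otimes> (\<Oplus>f\<in>F. c f \<otimes> g f) = (\<Oplus>f\<in>F. (r \<otimes> c f) \<otimes> g f)"
proof -
  have "r \<otimes> (\<Oplus>f\<in>F. c f \<otimes> g f) = (\<Oplus>f\<in>F. r \<otimes> (c f \<otimes> g f))"
    using assms by (intro finsum_rdistr) auto
  also have "\<dots> = (\<Oplus>f\<in>F. (r \<otimes> c f) \<otimes> g f)"
    using assms by (intro finsum_cong') (auto simp: m_assoc)
  finally show ?thesis .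
qed

lemma finsum_lincomb_delta:
  assumes "finite F" "h \<in> F" "\<And>f. f \<in> F \<Longrightarrow> g f \<in> carrier R"
  shows "(\<Oplus>f\<in>F. (if f = h then \<one> else \<zero>) \<otimes> g f) = g h"
proof -
  have "(\<Oplus>f\<in>F. (if f = h then \<one> else \<zero>) \<otimes> g f) = (\<Oplus>f\<in>F. if h = f then g f else \<zero>)"
    using assms by (intro finsum_cong') auto
  also have "\<dots> = g h"
    using finsum_singleton[of h F g] assms by auto
  finally show ?thesis .
qed

end

lemma (in ring) mem_set_add_iff: "x \<in> A <+>\<^bsub>R\<^esub> B \<longleftrightarrow> (\<exists>a\<in>A. \<exists>b\<in>B. x = a \<oplus> b)"
  by (auto simp: set_add_def')

lemma (in ring) subset_set_add_left:
  assumes "\<zero> \<in> B" "A \<subseteq> carrier R"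
  shows "A \<subseteq> A <+>\<^bsub>R\<^esub> B"
proof
  fix x assume "x \<in> A"
  moreover have "x = x \<oplus> \<zero>"
    using \<open>x \<in> A\<close> assms(2) by auto
  ultimately show "x \<in> A <+>\<^bsub>R\<^esub> B"
    using assms(1) unfolding mem_set_add_iff by blast
qed

lemma (in ring) set_add_mono_left: "A \<subseteq> A' \<Longrightarrow> A <+>\<^bsub>R\<^esub> B \<subseteq> A' <+>\<^bsub>R\<^esub> B"
  unfolding subset_iff mem_set_add_iff by blast

lemma (in cring) cring_idealI:
  assumes "A \<subseteq> carrier R" "\<zero> \<in> A" "\<And>x y. x \<in> A \<Longrightarrow> y \<in> A \<Longrightarrow> x \<oplus> y \<in> A"
    and "\<And>r x. r \<in> carrier R \<Longrightarrow> x \<in> A \<Longrightarrow> r \<otimes> x \<in> A"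
  shows "ideal A R"
proof (rule idealI)
  have "\<ominus> x \<in> A" if "x \<in> A" for x
    using assms(4)[of "\<ominus> \<one>" x] that assms(1) by (auto simp: l_minus)
  then show "subgroup A (add_monoid R)"
    using assms(1-3) by (intro add.subgroupI) (auto simp: a_inv_def[symmetric])
  show "x \<otimes> a \<in> A" if "a \<in> A" "x \<in> carrier R" for a x
    by (rule assms(4)[OF that(2,1)])
  then show "a \<otimes> x \<in> A" if "a \<in> A" "x \<in> carrier R" for a x
    using that assms(1) m_comm[of a x] by auto
qed (rule ring_axioms)

subsection \<open>Powers and colons of ideals\<close>

context cring
begin

lemma ideal_pow_is_ideal: "ideal I R \<Longrightarrow> ideal (ideal_pow R I n) R"
  by (induction n) (simp_all add: oneideal ideal_prod_is_ideal)

lemma ideal_pow_zero_closed: "ideal I R \<Longrightarrow> \<zero> \<in> ideal_pow R I n"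
  using ideal_pow_is_ideal by (simp add: additive_subgroup.zero_closed ideal.axioms(1))

lemma ideal_pow_one: "ideal I R \<Longrightarrow> ideal_pow R I 1 = I"
  by (simp add: ideal_prod_one)

lemma ideal_pow_Suc': "ideal I R \<Longrightarrow> ideal_pow R I (Suc n) = ideal_pow R I n \<cdot> I"
  by (simp add: ideal_prod_commute ideal_pow_is_ideal)

lemma ideal_pow_add:
  assumes "ideal I R"
  shows "ideal_pow R I a \<cdot> ideal_pow R I b = ideal_pow R I (a + b)"
proof (induction a)
  case 0
  show ?case
    using ideal_prod_one ideal_prod_commute[OF oneideal] ideal_pow_is_ideal[OF assms] by simp
next
  case (Suc a)
  then show ?case
    using ideal_prod_assoc[OF assms ideal_pow_is_ideal[OF assms] ideal_pow_is_ideal[OF assms]] by simp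
qed

lemma ideal_pow_mult_mem:
  assumes "ideal I R" "x \<in> ideal_pow R I a" "y \<in> ideal_pow R I b"
  shows "x \<otimes> y \<in> ideal_pow R I (a + b)"
  using ideal_prod.prod[OF assms(2,3), of R] ideal_pow_add[OF assms(1)] by simp

lemma ideal_pow_mult_prod_mem:
  assumes "ideal I R" "ideal K R" "x \<in> ideal_pow R I a" "y \<in> ideal_pow R I b \<cdot> K"
  shows "x \<otimes> y \<in> ideal_pow R I (a + b) \<cdot> K"
proof -
  have "x \<otimes> y \<in> ideal_pow R I a \<cdot> (ideal_pow R I b \<cdot> K)"
    using assms(3,4) by (rule ideal_prod.prod)
  then show ?thesis
    using ideal_prod_assoc[OF ideal_pow_is_ideal[OF assms(1)] ideal_pow_is_ideal[OF assms(1)] assms(2)]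
    by (simp add: ideal_pow_add[OF assms(1)])
qed

lemma ideal_pow_mult_sum_mem:
  assumes "ideal I R" "ideal J R" "ideal K R"
    and "x \<in> ideal_pow R I a" "y \<in> J <+>\<^bsub>R\<^esub> ideal_pow R I b \<cdot> K"
  shows "x \<otimes> y \<in> J <+>\<^bsub>R\<^esub> ideal_pow R I (a + b) \<cdot> K"
proof -
  obtain j k where jk: "j \<in> J" "k \<in> ideal_pow R I b \<cdot> K" "y = j \<oplus> k"
    using assms(5) by (auto simp: mem_set_add_iff)
  have carr: "x \<in> carrier R" "j \<in> carrier R" "k \<in> carrier R"
    using ideal.Icarr[OF ideal_pow_is_ideal[OF assms(1)] assms(4)] ideal.Icarr[OF assms(2) jk(1)]
      ideal.Icarr[OF ideal_prod_is_ideal[OF ideal_pow_is_ideal[OF assms(1)] assms(3)] jk(2)]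
    by auto
  have "x \<otimes> j \<in> J"
    using ideal.I_l_closed[OF assms(2) jk(1) carr(1)] .
  moreover have "x \<otimes> k \<in> ideal_pow R I (a + b) \<cdot> K"
    using ideal_pow_mult_prod_mem[OF assms(1,3,4) jk(2)] .
  ultimately show ?thesis
    using carr jk(3) by (auto simp: mem_set_add_iff r_distr)
qed

lemma ideal_prod_subsetI:
  assumes "ideal C R" "\<And>a b. a \<in> A \<Longrightarrow> b \<in> B \<Longrightarrow> a \<otimes> b \<in> C"
  shows "A \<cdot> B \<subseteq> C"
proof
  show "x \<in> C" if "x \<in> A \<cdot> B" for x
    using that
    by (induction x rule: ideal_prod.induct)
       (auto simp: assms additive_subgroup.a_closed ideal.axioms(1))
qed

lemma ideal_colon_is_ideal:
  assumes "ideal Y R" "X \<subseteq> carrier R"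
  shows "ideal (ideal_colon R Y X) R"
  unfolding ideal_colon_def
proof (rule cring_idealI)
  show "\<zero> \<in> {r \<in> carrier R. \<forall>b\<in>X. r \<otimes> b \<in> Y}"
    using assms by (auto simp: additive_subgroup.zero_closed ideal.axioms(1))
  show "x \<oplus> y \<in> {r \<in> carrier R. \<forall>b\<in>X. r \<otimes> b \<in> Y}"
    if "x \<in> {r \<in> carrier R. \<forall>b\<in>X. r \<otimes> b \<in> Y}" "y \<in> {r \<in> carrier R. \<forall>b\<in>X. r \<otimes> b \<in> Y}" for x y
    using that assms by (auto simp: l_distr additive_subgroup.a_closed ideal.axioms(1) subset_iff)
  show "r \<otimes> x \<in> {r \<in> carrier R. \<forall>b\<in>X. r \<otimes> b \<in> Y}"
    if "r \<in> carrier R" "x \<in> {r \<in> carrier R. \<forall>b\<in>X. r \<otimes> b \<in> Y}" for r x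
    using that assms by (auto simp: m_assoc ideal.I_l_closed subset_iff)
qed auto

lemma mem_ideal_colon_genideal:
  assumes "ideal Y R" "G \<subseteq> carrier R" "x \<in> carrier R" "\<And>g. g \<in> G \<Longrightarrow> x \<otimes> g \<in> Y"
  shows "x \<in> ideal_colon R Y (Idl G)"
proof -
  have "G \<subseteq> ideal_colon R Y {x}"
    using assms by (auto simp: ideal_colon_def m_comm subset_iff)
  then have "Idl G \<subseteq> ideal_colon R Y {x}"
    using assms(1,3) by (intro genideal_minimal ideal_colon_is_ideal) auto
  then show ?thesis
    using assms(3) by (auto simp: ideal_colon_def m_comm genideal_ideal[OF assms(2), THEN ideal.Icarr])
qed

lemma ideal_colon_sum_pow_mult:
  assumes "ideal I R" "ideal J R" "ideal K R"
    and r: "r \<in> ideal_colon R (J <+>\<^bsub>R\<^esub> ideal_pow R I q \<cdot> K) I"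
    and x: "x \<in> ideal_pow R I (Suc e)"
  shows "x \<otimes> r \<in> J <+>\<^bsub>R\<^esub> ideal_pow R I (q + e) \<cdot> K"
proof -
  have rc: "r \<in> carrier R"
    using r by (simp add: ideal_colon_def)
  have "ideal_pow R I e \<cdot> I \<subseteq> ideal_colon R (J <+>\<^bsub>R\<^esub> ideal_pow R I (q + e) \<cdot> K) {r}"
  proof (rule ideal_prod_subsetI)
    show "ideal (ideal_colon R (J <+>\<^bsub>R\<^esub> ideal_pow R I (q + e) \<cdot> K) {r}) R"
      using rc assms(1-3)
      by (simp add: ideal_colon_is_ideal add_ideals ideal_prod_is_ideal ideal_pow_is_ideal)
    fix p i assume p: "p \<in> ideal_pow R I e" and i: "i \<in> I"
    have carr: "p \<in> carrier R" "i \<in> carrier R"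
      using ideal.Icarr[OF ideal_pow_is_ideal[OF assms(1)] p] ideal.Icarr[OF assms(1) i] by auto
    have "r \<otimes> i \<in> J <+>\<^bsub>R\<^esub> ideal_pow R I q \<cdot> K"
      using r i by (simp add: ideal_colon_def)
    then have "p \<otimes> (r \<otimes> i) \<in> J <+>\<^bsub>R\<^esub> ideal_pow R I (e + q) \<cdot> K"
      by (rule ideal_pow_mult_sum_mem[OF assms(1-3) p])
    moreover have "(p \<otimes> i) \<otimes> r = p \<otimes> (r \<otimes> i)"
      using m_assoc[OF carr rc] m_comm[OF carr(2) rc] by simp
    ultimately show "p \<otimes> i \<in> ideal_colon R (J <+>\<^bsub>R\<^esub> ideal_pow R I (q + e) \<cdot> K) {r}"
      using carr by (simp add: ideal_colon_def add.commute)
  qed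
  moreover have "x \<in> ideal_pow R I e \<cdot> I"
    using x ideal_pow_Suc'[OF assms(1)] by simp
  ultimately show ?thesis
    by (auto simp: ideal_colon_def)
qed

lemma ideal_colon_sum_pow_superset:
  assumes "ideal I R" "ideal J R" "ideal K R"
  shows "ideal_colon R J I <+>\<^bsub>R\<^esub> ideal_pow R I m \<cdot> K
           \<subseteq> ideal_colon R (J <+>\<^bsub>R\<^esub> ideal_pow R I (Suc m) \<cdot> K) I"
proof
  fix x assume "x \<in> ideal_colon R J I <+>\<^bsub>R\<^esub> ideal_pow R I m \<cdot> K"
  then obtain y z where y: "y \<in> ideal_colon R J I" and z: "z \<in> ideal_pow R I m \<cdot> K"
    and x: "x = y \<oplus> z"
    by (auto simp: mem_set_add_iff)
  have carr: "y \<in> carrier R" "z \<in> carrier R"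
    using y ideal_prod_in_carrier[OF ideal_pow_is_ideal[OF assms(1)] assms(3)] z
    unfolding ideal_colon_def by blast+
  have "x \<otimes> b \<in> J <+>\<^bsub>R\<^esub> ideal_pow R I (Suc m) \<cdot> K" if b: "b \<in> I" for b
  proof -
    have bc: "b \<in> carrier R"
      using ideal.Icarr[OF assms(1) b] .
    have "b \<in> ideal_pow R I 1"
      using b ideal_pow_one[OF assms(1)] by simp
    then have "b \<otimes> z \<in> ideal_pow R I (1 + m) \<cdot> K"
      by (rule ideal_pow_mult_prod_mem[OF assms(1,3) _ z])
    moreover have "y \<otimes> b \<in> J"
      using y b unfolding ideal_colon_def by blast
    moreover have "x \<otimes> b = y \<otimes> b \<oplus> b \<otimes> z"
      using carr bc x by (simp add: l_distr m_comm[of z b])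
    ultimately show ?thesis
      unfolding mem_set_add_iff by auto
  qed
  then show "x \<in> ideal_colon R (J <+>\<^bsub>R\<^esub> ideal_pow R I (Suc m) \<cdot> K) I"
    using carr x unfolding ideal_colon_def by simp
qed

end

subsection \<open>Ideals of subrings\<close>

lemma (in cring) ideal_of_subringI:
  assumes "subring B R" "A \<subseteq> B" "\<zero> \<in> A" "\<And>x y. x \<in> A \<Longrightarrow> y \<in> A \<Longrightarrow> x \<oplus> y \<in> A"
    and "\<And>r x. r \<in> B \<Longrightarrow> x \<in> A \<Longrightarrow> r \<otimes> x \<in> A"
  shows "ideal A (R\<lparr>carrier := B\<rparr>)"
proof -
  interpret S: cring "R\<lparr>carrier := B\<rparr>"
    using subcring_iff[OF subringE(1)[OF assms(1)]] subcringI'[OF assms(1)] by simp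
  show ?thesis
    by (rule S.cring_idealI) (use assms in auto)
qed

lemma (in ring) ideal_of_subringD:
  assumes "ideal A (R\<lparr>carrier := B\<rparr>)"
  shows "A \<subseteq> B" and "\<zero> \<in> A" and "x \<in> A \<Longrightarrow> y \<in> A \<Longrightarrow> x \<oplus> y \<in> A"
    and "r \<in> B \<Longrightarrow> x \<in> A \<Longrightarrow> r \<otimes> x \<in> A"
proof -
  interpret A: ideal A "R\<lparr>carrier := B\<rparr>" by (rule assms)
  show "A \<subseteq> B" using A.a_subset by simp
  show "\<zero> \<in> A" using additive_subgroup.zero_closed[OF ideal.axioms(1)[OF assms]] by simp
  show "x \<in> A \<Longrightarrow> y \<in> A \<Longrightarrow> x \<oplus> y \<in> A"
    using additive_subgroup.a_closed[OF ideal.axioms(1)[OF assms]] by simp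
  show "r \<in> B \<Longrightarrow> x \<in> A \<Longrightarrow> r \<otimes> x \<in> A" using A.I_l_closed by simp
qed

lemma (in cring) finsum_combinations_ideal:
  assumes B: "subring B R" and F: "finite F" "F \<subseteq> B"
  shows "ideal {\<Oplus>f\<in>F. c f \<otimes> f | c. c \<in> F \<rightarrow> B} (R\<lparr>carrier := B\<rparr>)"
    (is "ideal ?C _")
proof (rule ideal_of_subringI[OF B])
  have Bc: "b \<in> carrier R" if "b \<in> B" for b
    using subringE(1)[OF B] that by blast
  have Fc: "f \<in> carrier R" if "f \<in> F" for f
    using that F(2) Bc by blast
  show "?C \<subseteq> B"
  proof
    fix x assume "x \<in> ?C"
    then obtain c where c: "c \<in> F \<rightarrow> B" "x = (\<Oplus>f\<in>F. c f \<otimes> f)"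
      by blast
    show "x \<in> B"
      unfolding c(2) using c(1) F subringE(6)[OF B] by (intro subring_finsum_closed[OF B]) auto
  qed
  show "\<zero> \<in> ?C"
    using subringE(2)[OF B] finsum_lincomb_zero[of F "\<lambda>f. f"] Fc
    by (intro CollectI exI[of _ "\<lambda>_. \<zero>"]) auto
  show "x \<oplus> y \<in> ?C" if x: "x \<in> ?C" and y: "y \<in> ?C" for x y
  proof -
    obtain c d where c: "c \<in> F \<rightarrow> B" "x = (\<Oplus>f\<in>F. c f \<otimes> f)"
      and d: "d \<in> F \<rightarrow> B" "y = (\<Oplus>f\<in>F. d f \<otimes> f)"
      using x y by blast
    have "x \<oplus> y = (\<Oplus>f\<in>F. (c f \<oplus> d f) \<otimes> f)"
      unfolding c(2) d(2) using c(1) d(1) Bc Fc by (intro finsum_lincomb_add) auto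
    then show ?thesis
      using c(1) d(1) subringE(7)[OF B] by (intro CollectI exI[of _ "\<lambda>f. c f \<oplus> d f"]) auto
  qed
  show "r \<otimes> x \<in> ?C" if r: "r \<in> B" and x: "x \<in> ?C" for r x
  proof -
    obtain c where c: "c \<in> F \<rightarrow> B" "x = (\<Oplus>f\<in>F. c f \<otimes> f)"
      using x by blast
    have "r \<otimes> x = (\<Oplus>f\<in>F. (r \<otimes> c f) \<otimes> f)"
      unfolding c(2) using c(1) r F(1) Bc Fc by (intro finsum_lincomb_smult) auto
    then show ?thesis
      using c(1) r subringE(6)[OF B] by (intro CollectI exI[of _ "\<lambda>f. r \<otimes> c f"]) auto
  qed
qed

lemma (in cring) finsum_combinations_self:
  assumes B: "subring B R" and F: "finite F" "F \<subseteq> B" and g: "g \<in> F"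
  shows "g \<in> {\<Oplus>f\<in>F. c f \<otimes> f | c. c \<in> F \<rightarrow> B}"
proof -
  have "f \<in> carrier R" if "f \<in> F" for f
    using F(2) subringE(1)[OF B] that by blast
  then have "(\<Oplus>f\<in>F. (if f = g then \<one> else \<zero>) \<otimes> f) = g"
    by (rule finsum_lincomb_delta[OF F(1) g])
  then show ?thesis
    using subringE(2,3)[OF B] by (intro CollectI exI[of _ "\<lambda>f. if f = g then \<one> else \<zero>"]) auto
qed

lemma (in cring) genideal_subring_finsum:
  assumes B: "subring B R" and F: "finite F" "F \<subseteq> B"
    and y: "y \<in> Idl\<^bsub>R\<lparr>carrier := B\<rparr>\<^esub> F"
  obtains c where "c \<in> F \<rightarrow> B" "y = (\<Oplus>f\<in>F. c f \<otimes> f)"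
proof -
  have "Idl\<^bsub>R\<lparr>carrier := B\<rparr>\<^esub> F \<subseteq> {\<Oplus>f\<in>F. c f \<otimes> f | c. c \<in> F \<rightarrow> B}"
    using finsum_combinations_self[OF B F]
    by (intro ring.genideal_minimal[OF subring_is_ring[OF B] finsum_combinations_ideal[OF B F]]) blast
  then show thesis
    using y that by blast
qed

lemma (in noetherian_ring) increasing_ideals_stabilize:
  assumes "\<And>d. ideal (L d) R" "\<And>d. L d \<subseteq> L (Suc d)"
  obtains D where "\<And>d. D \<le> d \<Longrightarrow> L d = L D"
proof -
  have mono: "L d \<subseteq> L d'" if "d \<le> d'" for d d'
    using lift_Suc_mono_le[of L, OF assms(2) that] .
  have "L i \<subseteq> L j \<or> L j \<subseteq> L i" for i j
    using mono[of i j] mono[of j i] by linarith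
  then have "subset.chain {I. ideal I R} (range L)"
    unfolding subset_chain_def using assms(1) by auto
  then have "\<Union>(range L) \<in> range L"
    by (intro ideal_chain_is_trivial) auto
  then obtain D where "\<Union>(range L) = L D"
    by auto
  then show thesis
    using mono by (intro that) blast
qed

lemma (in ring_hom_cring) ideal_preimage:
  assumes "ideal A (S\<lparr>carrier := h ` carrier R\<rparr>)"
  shows "ideal {c \<in> carrier R. h c \<in> A} R"
  using S.ideal_of_subringD[OF assms] by (intro R.cring_idealI) auto

lemma (in ring_hom_cring) noetherian_ring_img:
  assumes "noetherian_ring R"
  shows "noetherian_ring (S\<lparr>carrier := h ` carrier R\<rparr>)"
proof -
  let ?S' = "S\<lparr>carrier := h ` carrier R\<rparr>"
  have sub: "subring (h ` carrier R) S"
    by (rule ring.img_is_subring[OF R.carrier_is_subring])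
  interpret S': ring ?S'
    by (rule S.subring_is_ring[OF sub])
  show ?thesis
  proof (rule S'.noetherian_ringI)
    fix A assume A: "ideal A ?S'"
    obtain F where F: "F \<subseteq> carrier R" "finite F" "{c \<in> carrier R. h c \<in> A} = Idl\<^bsub>R\<^esub> F"
      using noetherian_ring.finetely_gen[OF assms ideal_preimage[OF A]] by blast
    have hF: "h ` F \<subseteq> A"
      using R.genideal_self[OF F(1)] F(3) by blast
    have "Idl\<^bsub>R\<^esub> F \<subseteq> {c \<in> carrier R. h c \<in> Idl\<^bsub>?S'\<^esub> (h ` F)}"
      using F(1) S'.genideal_self[of "h ` F"]
      by (intro R.genideal_minimal ideal_preimage S'.genideal_ideal) auto
    then have "A \<subseteq> Idl\<^bsub>?S'\<^esub> (h ` F)"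
      using S.ideal_of_subringD(1)[OF A] F(3) by blast
    moreover have "Idl\<^bsub>?S'\<^esub> (h ` F) \<subseteq> A"
      using S'.genideal_minimal[OF A hF] .
    ultimately show "\<exists>F'\<subseteq>carrier ?S'. finite F' \<and> A = Idl\<^bsub>?S'\<^esub> F'"
      using F(1,2) by (intro exI[of _ "h ` F"]) auto
  qed
qed

context cring
begin

definition poly_sum :: "(nat \<Rightarrow> 'a) \<Rightarrow> 'a \<Rightarrow> nat \<Rightarrow> 'a" where
  "poly_sum c x n = (\<Oplus>i\<in>{..<n}. c i \<otimes> x [^] i)"

context
  fixes x
  assumes x: "x \<in> carrier R"
begin

lemma poly_sum_closed: "(\<And>i. c i \<in> carrier R) \<Longrightarrow> poly_sum c x n \<in> carrier R"
  unfolding poly_sum_def using x by (intro finsum_closed) auto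

lemma poly_sum_0 [simp]: "poly_sum c x 0 = \<zero>"
  by (simp add: poly_sum_def)

lemma poly_sum_Suc:
  assumes "\<And>i. c i \<in> carrier R"
  shows "poly_sum c x (Suc n) = poly_sum c x n \<oplus> c n \<otimes> x [^] n"
proof -
  have "poly_sum c x (Suc n) = c n \<otimes> x [^] n \<oplus> poly_sum c x n"
    unfolding poly_sum_def lessThan_Suc using assms x by (subst finsum_insert) auto
  then show ?thesis
    using assms x poly_sum_closed[OF assms] by (simp add: a_comm)
qed

lemma poly_sum_cong:
  assumes "\<And>i. i < n \<Longrightarrow> c i = d i" "\<And>i. d i \<in> carrier R"
  shows "poly_sum c x n = poly_sum d x n"
  unfolding poly_sum_def using assms x by (intro finsum_cong') auto

lemma poly_sum_zero_tail:
  assumes "\<And>i. c i \<in> carrier R" "\<And>i. n \<le> i \<Longrightarrow> c i = \<zero>" "n \<le> m"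
  shows "poly_sum c x m = poly_sum c x n"
  using assms(3)
proof (induction m rule: dec_induct)
  case (step m)
  then show ?case
    using assms(1,2) x by (simp add: poly_sum_Suc poly_sum_closed)
qed simp

lemma poly_sum_add:
  assumes "\<And>i. c i \<in> carrier R" "\<And>i. d i \<in> carrier R"
  shows "poly_sum (\<lambda>i. c i \<oplus> d i) x n = poly_sum c x n \<oplus> poly_sum d x n"
proof -
  have "poly_sum (\<lambda>i. c i \<oplus> d i) x n = (\<Oplus>i\<in>{..<n}. c i \<otimes> x [^] i \<oplus> d i \<otimes> x [^] i)"
    unfolding poly_sum_def using assms x by (intro finsum_cong') (auto simp: l_distr)
  also have "\<dots> = poly_sum c x n \<oplus> poly_sum d x n"
    unfolding poly_sum_def using assms x by (intro finsum_addf) auto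
  finally show ?thesis .
qed

lemma poly_sum_smult:
  assumes "\<And>i. c i \<in> carrier R" "r \<in> carrier R"
  shows "r \<otimes> poly_sum c x n = poly_sum (\<lambda>i. r \<otimes> c i) x n"
proof -
  have "r \<otimes> poly_sum c x n = (\<Oplus>i\<in>{..<n}. r \<otimes> (c i \<otimes> x [^] i))"
    unfolding poly_sum_def using assms x by (intro finsum_rdistr) auto
  also have "\<dots> = poly_sum (\<lambda>i. r \<otimes> c i) x n"
    unfolding poly_sum_def using assms x by (intro finsum_cong') (auto simp: m_assoc)
  finally show ?thesis .
qed

lemma poly_sum_shift:
  assumes "\<And>i. c i \<in> carrier R"
  shows "x [^] k \<otimes> poly_sum c x n = poly_sum (\<lambda>i. if i < k then \<zero> else c (i - k)) x (n + k)"
proof (induction n)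
  case 0
  have "poly_sum (\<lambda>i. if i < k then \<zero> else c (i - k)) x k = poly_sum (\<lambda>_. \<zero>) x k"
    by (rule poly_sum_cong) auto
  also have "\<dots> = \<zero>"
    unfolding poly_sum_def using x by (simp add: finsum_cong'[of _ _ "\<lambda>_. \<zero>"])
  finally show ?case
    using x by simp
next
  case (Suc n)
  have "c n \<otimes> x [^] (n + k) = x [^] k \<otimes> (c n \<otimes> x [^] n)"
    using assms x by (simp add: nat_pow_mult[symmetric] m_ac)
  then show ?case
    using Suc assms x
    by (simp add: poly_sum_Suc poly_sum_closed r_distr)
qed

lemma poly_sum_finsum:
  assumes "finite A" "\<And>a i. w a i \<in> carrier R"
  shows "(\<Oplus>a\<in>A. poly_sum (w a) x n) = poly_sum (\<lambda>i. \<Oplus>a\<in>A. w a i) x n"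
  using assms(1)
proof (induction A rule: finite_induct)
  case empty
  have "poly_sum (\<lambda>_. \<zero>) x n = \<zero>"
    unfolding poly_sum_def using x by (simp add: finsum_cong'[of _ _ "\<lambda>_. \<zero>"])
  then show ?case
    by simp
next
  case (insert a A)
  have "(\<Oplus>a\<in>insert a A. poly_sum (w a) x n) = poly_sum (w a) x n \<oplus> poly_sum (\<lambda>i. \<Oplus>a\<in>A. w a i) x n"
    using insert assms(2) by (simp add: poly_sum_closed Pi_iff)
  also have "\<dots> = poly_sum (\<lambda>i. \<Oplus>a\<in>insert a A. w a i) x n"
    using insert assms(2) by (simp add: poly_sum_add[symmetric] finsum_closed Pi_iff)
  finally show ?case .
qed

lemma poly_sum_mult_monom:
  assumes "\<And>i. w i \<in> carrier R" "b \<in> carrier R"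
  shows "(b \<otimes> x [^] k) \<otimes> poly_sum w x n
           = poly_sum (\<lambda>i. b \<otimes> (if i < k then \<zero> else w (i - k))) x (n + k)"
  using assms x
  by (simp add: m_assoc poly_sum_closed poly_sum_shift poly_sum_smult[symmetric])

lemma poly_sum_mult:
  assumes "\<And>i. c i \<in> carrier R" "\<And>i. d i \<in> carrier R" "\<And>i. m \<le> i \<Longrightarrow> d i = \<zero>"
  shows "poly_sum c x n \<otimes> poly_sum d x m
           = poly_sum (\<lambda>j. \<Oplus>k\<in>{..<n}. c k \<otimes> (if j < k then \<zero> else d (j - k))) x (n + m)"
proof -
  let ?e = "\<lambda>k j. c k \<otimes> (if j < k then \<zero> else d (j - k))"
  have e: "?e k j \<in> carrier R" for k j
    using assms by simp
  have "poly_sum c x n \<otimes> poly_sum d x m = (\<Oplus>k\<in>{..<n}. (c k \<otimes> x [^] k) \<otimes> poly_sum d x m)"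
    unfolding poly_sum_def[of c] using assms x by (intro finsum_ldistr) (auto simp: poly_sum_closed)
  also have "\<dots> = (\<Oplus>k\<in>{..<n}. poly_sum (?e k) x (n + m))"
  proof (rule finsum_cong')
    fix k assume "k \<in> {..<n}"
    have "(c k \<otimes> x [^] k) \<otimes> poly_sum d x m = poly_sum (?e k) x (m + k)"
      using assms by (simp add: poly_sum_mult_monom)
    also have "\<dots> = poly_sum (?e k) x (n + m)"
      using \<open>k \<in> {..<n}\<close> assms e by (intro poly_sum_zero_tail[symmetric]) auto
    finally show "(c k \<otimes> x [^] k) \<otimes> poly_sum d x m = poly_sum (?e k) x (n + m)" .
  qed (auto simp: poly_sum_closed e)
  also have "\<dots> = poly_sum (\<lambda>j. \<Oplus>k\<in>{..<n}. ?e k j) x (n + m)"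
    using e by (intro poly_sum_finsum) auto
  finally show ?thesis .
qed

lemma poly_sum_zero: "poly_sum (\<lambda>_. \<zero>) x n = \<zero>"
  unfolding poly_sum_def using x by (simp add: finsum_cong'[of _ _ "\<lambda>_. \<zero>"])

lemma poly_sum_single:
  assumes "b \<in> carrier R" "k < n"
  shows "poly_sum (\<lambda>i. if i = k then b else \<zero>) x n = b \<otimes> x [^] k"
proof -
  have "poly_sum (\<lambda>i. if i = k then b else \<zero>) x n = poly_sum (\<lambda>i. if i = k then b else \<zero>) x (Suc k)"
    using assms by (intro poly_sum_zero_tail) auto
  also have "\<dots> = poly_sum (\<lambda>i. if i = k then b else \<zero>) x k \<oplus> b \<otimes> x [^] k"
    using assms by (simp add: poly_sum_Suc)
  also have "poly_sum (\<lambda>i. if i = k then b else \<zero>) x k = poly_sum (\<lambda>_. \<zero>) x k"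
    by (rule poly_sum_cong) auto
  finally show ?thesis
    using assms x by (simp add: poly_sum_zero)
qed

lemma poly_sum_top_reduce:
  assumes "\<And>i. c i \<in> carrier R" "\<And>i. c' i \<in> carrier R" "c' d = c d"
  shows "poly_sum c x (Suc d) = poly_sum (\<lambda>i. c i \<ominus> c' i) x d \<oplus> poly_sum c' x (Suc d)"
proof -
  have diff: "c i \<ominus> c' i \<in> carrier R" for i
    using assms by simp
  have "poly_sum c x (Suc d) = poly_sum (\<lambda>i. (c i \<ominus> c' i) \<oplus> c' i) x (Suc d)"
    using assms by (intro poly_sum_cong) (auto simp: a_minus_def a_assoc l_neg)
  also have "\<dots> = poly_sum (\<lambda>i. c i \<ominus> c' i) x (Suc d) \<oplus> poly_sum c' x (Suc d)"
    using assms diff by (intro poly_sum_add)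
  also have "poly_sum (\<lambda>i. c i \<ominus> c' i) x (Suc d) = poly_sum (\<lambda>i. c i \<ominus> c' i) x d"
    using assms diff x by (simp add: poly_sum_Suc poly_sum_closed a_minus_def r_neg)
  finally show ?thesis .
qed

lemma poly_sum_shifted_combination:
  assumes "finite F" "\<And>f. f \<in> F \<Longrightarrow> e f \<in> carrier R" "\<And>f i. f \<in> F \<Longrightarrow> w f i \<in> carrier R"
  shows "(\<Oplus>f\<in>F. (e f \<otimes> x [^] k) \<otimes> poly_sum (w f) x n)
           = poly_sum (\<lambda>i. \<Oplus>f\<in>F. e f \<otimes> (if i < k then \<zero> else w f (i - k))) x (n + k)"
proof -
  let ?w = "\<lambda>f i. if f \<in> F then e f \<otimes> (if i < k then \<zero> else w f (i - k)) else \<zero>"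
  have "(\<Oplus>f\<in>F. (e f \<otimes> x [^] k) \<otimes> poly_sum (w f) x n) = (\<Oplus>f\<in>F. poly_sum (?w f) x (n + k))"
  proof (rule finsum_cong')
    show "(e f \<otimes> x [^] k) \<otimes> poly_sum (w f) x n = poly_sum (?w f) x (n + k)" if "f \<in> F" for f
      using that assms(2,3) by (simp add: poly_sum_mult_monom)
  qed (use assms in \<open>auto simp: poly_sum_closed\<close>)
  also have "\<dots> = poly_sum (\<lambda>i. \<Oplus>f\<in>F. ?w f i) x (n + k)"
    using assms by (intro poly_sum_finsum) auto
  also have "\<dots> = poly_sum (\<lambda>i. \<Oplus>f\<in>F. e f \<otimes> (if i < k then \<zero> else w f (i - k))) x (n + k)"
    using assms by (intro poly_sum_cong finsum_cong' finsum_closed) auto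
  finally show ?thesis .
qed

end

end

context cring
begin

lemma subring_nat_pow_closed: "subring C R \<Longrightarrow> x \<in> C \<Longrightarrow> x [^] (n::nat) \<in> C"
  by (induction n) (auto simp: subringE(3,6))

lemma poly_sum_in_subring:
  assumes C: "subring C R" and "x \<in> C" "\<And>i. c i \<in> C"
  shows "poly_sum c x n \<in> C"
  unfolding poly_sum_def using assms subringE(6)[OF C] subring_nat_pow_closed[OF C]
  by (intro subring_finsum_closed[OF C]) auto

definition poly_sums :: "'a set \<Rightarrow> 'a \<Rightarrow> 'a set" where
  "poly_sums B x = {y. \<exists>c n. (\<forall>i. c i \<in> B) \<and> (\<forall>i\<ge>n. c i = \<zero>) \<and> y = poly_sum c x n}"

context
  fixes B x
  assumes B: "subring B R" and x: "x \<in> carrier R"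
begin

lemma poly_sumsI: "\<forall>i. c i \<in> B \<Longrightarrow> \<forall>i\<ge>n. c i = \<zero> \<Longrightarrow> poly_sum c x n \<in> poly_sums B x"
  unfolding poly_sums_def by blast

lemma poly_sumsE:
  assumes "y \<in> poly_sums B x"
  obtains c n where "\<forall>i. c i \<in> B" "\<forall>i\<ge>n. c i = \<zero>" "y = poly_sum c x n"
  using assms unfolding poly_sums_def by blast

lemma subset_poly_sums: "insert x B \<subseteq> poly_sums B x"
proof -
  have "poly_sum (\<lambda>i. if i = 1 then \<one> else \<zero>) x 2 \<in> poly_sums B x"
    using subringE(2,3)[OF B] by (intro poly_sumsI) auto
  moreover have "poly_sum (\<lambda>i. if i = 0 then b else \<zero>) x 1 \<in> poly_sums B x" if "b \<in> B" for b
    using subringE(2)[OF B] that by (intro poly_sumsI) auto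
  ultimately show ?thesis
    using x subringE(1)[OF B, THEN subsetD] by (auto simp: poly_sum_single)
qed

lemma poly_sums_mult:
  assumes "y \<in> poly_sums B x" "z \<in> poly_sums B x"
  shows "y \<otimes> z \<in> poly_sums B x"
proof -
  obtain c n d m where c: "\<forall>i. c i \<in> B" "y = poly_sum c x n"
    and d: "\<forall>i. d i \<in> B" "\<forall>i\<ge>m. d i = \<zero>" "z = poly_sum d x m"
    using assms by (metis poly_sumsE)
  let ?e = "\<lambda>j. \<Oplus>k\<in>{..<n}. c k \<otimes> (if j < k then \<zero> else d (j - k))"
  have "y \<otimes> z = poly_sum ?e x (n + m)"
    using c d x subringE(1)[OF B] by (auto intro!: poly_sum_mult)
  moreover have "?e j \<in> B" for j
    using c d subringE(2,6)[OF B] by (intro subring_finsum_closed[OF B]) auto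
  moreover have "?e j = \<zero>" if "n + m \<le> j" for j
  proof -
    have "?e j = (\<Oplus>k\<in>{..<n}. \<zero>)"
      using c d that subringE(1)[OF B, THEN subsetD] by (intro finsum_cong') auto
    then show ?thesis by simp
  qed
  ultimately show ?thesis
    by (auto intro!: poly_sumsI)
qed

lemma poly_sums_subring: "subring (poly_sums B x) R"
proof (rule subringI)
  show "poly_sums B x \<subseteq> carrier R"
    using x subringE(1)[OF B] by (auto elim!: poly_sumsE intro!: poly_sum_closed)
  show "\<one> \<in> poly_sums B x"
    using subset_poly_sums subringE(3)[OF B] by blast
  show "\<ominus> y \<in> poly_sums B x" if y: "y \<in> poly_sums B x" for y
  proof -
    obtain c n where c: "\<forall>i. c i \<in> B" "\<forall>i\<ge>n. c i = \<zero>" "y = poly_sum c x n"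
      using y by (rule poly_sumsE)
    have cc: "c i \<in> carrier R" for i
      using c(1) subringE(1)[OF B] by blast
    have "\<ominus> y = \<ominus> \<one> \<otimes> poly_sum c x n"
      using c(3) cc x by (simp add: poly_sum_closed l_minus)
    also have "\<dots> = poly_sum (\<lambda>i. \<ominus> c i) x n"
      using cc x by (simp add: poly_sum_smult l_minus)
    finally show ?thesis
      using c subringE(5)[OF B] by (auto intro!: poly_sumsI)
  qed
  show "y \<oplus> z \<in> poly_sums B x" if y: "y \<in> poly_sums B x" and z: "z \<in> poly_sums B x" for y z
  proof -
    obtain c n d m where c: "\<forall>i. c i \<in> B" "\<forall>i\<ge>n. c i = \<zero>" "y = poly_sum c x n"
      and d: "\<forall>i. d i \<in> B" "\<forall>i\<ge>m. d i = \<zero>" "z = poly_sum d x m"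
      using y z by (metis poly_sumsE)
    have cc: "c i \<in> carrier R" "d i \<in> carrier R" for i
      using c(1) d(1) subringE(1)[OF B] by blast+
    have "y = poly_sum c x (max n m)" "z = poly_sum d x (max n m)"
      using c d x cc by (auto intro!: poly_sum_zero_tail[symmetric])
    then have "y \<oplus> z = poly_sum (\<lambda>i. c i \<oplus> d i) x (max n m)"
      using x cc by (simp add: poly_sum_add)
    then show ?thesis
      using c d subringE(2,7)[OF B] by (auto intro!: poly_sumsI)
  qed
qed (rule poly_sums_mult)

lemma generate_ring_insert_poly_sum:
  assumes "y \<in> generate_ring R (insert x B)"
  obtains c n where "\<And>i. c i \<in> B" "y = poly_sum c x n"
proof -
  have "generate_ring R (insert x B) \<subseteq> poly_sums B x"
    using x subringE(1)[OF B] subset_poly_sums poly_sums_subring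
    by (intro generate_ring_min_subring1) auto
  then show thesis
    using assms that by (auto elim!: poly_sumsE)
qed

end

definition top_coeffs :: "'a set \<Rightarrow> 'a \<Rightarrow> 'a set \<Rightarrow> nat \<Rightarrow> 'a set" where
  "top_coeffs B x A d = {c d | c. (\<forall>i. c i \<in> B) \<and> poly_sum c x (Suc d) \<in> A}"

context
  fixes B x
  assumes B: "subring B R" and x: "x \<in> carrier R"
begin

lemma generate_ring_insert_subring: "subring (generate_ring R (insert x B)) R"
  using x subringE(1)[OF B] by (intro generate_ring_is_subring) auto

lemma generate_ring_insert_ring: "ring (R\<lparr>carrier := generate_ring R (insert x B)\<rparr>)"
  using x subringE(1)[OF B] by (intro generate_ring_is_ring) auto

lemma mem_generate_ring_insert:
  "b \<in> B \<Longrightarrow> b \<in> generate_ring R (insert x B)" "x \<in> generate_ring R (insert x B)"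
  by (auto intro: generate_ring.incl)

context
  fixes A
  assumes A: "ideal A (R\<lparr>carrier := generate_ring R (insert x B)\<rparr>)"
begin

lemma top_coeffs_ideal: "ideal (top_coeffs B x A d) (R\<lparr>carrier := B\<rparr>)"
proof (rule ideal_of_subringI[OF B])
  note A_closed = ideal_of_subringD[OF A]
  show "top_coeffs B x A d \<subseteq> B"
    unfolding top_coeffs_def by auto
  have "poly_sum (\<lambda>_. \<zero>) x (Suc d) \<in> A"
    using A_closed(2) x by (simp add: poly_sum_zero)
  then show "\<zero> \<in> top_coeffs B x A d"
    unfolding top_coeffs_def using subringE(2)[OF B]
    by (intro CollectI exI[of _ "\<lambda>_. \<zero>"]) auto
  show "a \<oplus> b \<in> top_coeffs B x A d"
    if ab: "a \<in> top_coeffs B x A d" "b \<in> top_coeffs B x A d" for a b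
  proof -
    obtain c c' where c: "\<forall>i. c i \<in> B" "poly_sum c x (Suc d) \<in> A" "a = c d"
      and c': "\<forall>i. c' i \<in> B" "poly_sum c' x (Suc d) \<in> A" "b = c' d"
      using ab unfolding top_coeffs_def by blast
    have "poly_sum (\<lambda>i. c i \<oplus> c' i) x (Suc d) \<in> A"
      using c c' A_closed(3) x subringE(1)[OF B, THEN subsetD] by (simp add: poly_sum_add)
    then show ?thesis
      unfolding top_coeffs_def using c c' subringE(7)[OF B]
      by (intro CollectI exI[of _ "\<lambda>i. c i \<oplus> c' i"]) auto
  qed
  show "r \<otimes> a \<in> top_coeffs B x A d" if r: "r \<in> B" and a: "a \<in> top_coeffs B x A d" for r a
  proof -
    obtain c where c: "\<forall>i. c i \<in> B" "poly_sum c x (Suc d) \<in> A" "a = c d"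
      using a unfolding top_coeffs_def by blast
    have "poly_sum (\<lambda>i. r \<otimes> c i) x (Suc d) \<in> A"
      using c r A_closed(4) mem_generate_ring_insert x subringE(1)[OF B, THEN subsetD]
      by (simp add: poly_sum_smult[symmetric])
    then show ?thesis
      unfolding top_coeffs_def using c r subringE(6)[OF B]
      by (intro CollectI exI[of _ "\<lambda>i. r \<otimes> c i"]) auto
  qed
qed

lemma top_coeffs_mono: "top_coeffs B x A d \<subseteq> top_coeffs B x A (Suc d)"
proof
  fix a assume "a \<in> top_coeffs B x A d"
  then obtain c where c: "\<forall>i. c i \<in> B" "poly_sum c x (Suc d) \<in> A" "a = c d"
    unfolding top_coeffs_def by blast
  let ?c = "\<lambda>i. if i < 1 then \<zero> else c (i - 1)"
  have "poly_sum ?c x (Suc (Suc d)) = x [^] (1::nat) \<otimes> poly_sum c x (Suc d)"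
    using poly_sum_shift[OF x, of c 1 "Suc d"] c subringE(1)[OF B, THEN subsetD] by simp
  also have "\<dots> \<in> A"
    using ideal_of_subringD(4)[OF A] mem_generate_ring_insert(2) c(2) x by simp
  finally show "a \<in> top_coeffs B x A (Suc d)"
    unfolding top_coeffs_def using c subringE(2)[OF B]
    by (intro CollectI exI[of _ ?c]) auto
qed

lemma subset_genideal_by_top_reduction:
  assumes G: "G \<subseteq> A"
    and reduce: "\<And>c d. \<forall>i. c i \<in> B \<Longrightarrow> poly_sum c x (Suc d) \<in> A \<Longrightarrow>
       \<exists>c'. (\<forall>i. c' i \<in> B) \<and> c' d = c d \<and>
            poly_sum c' x (Suc d) \<in> Idl\<^bsub>R\<lparr>carrier := generate_ring R (insert x B)\<rparr>\<^esub> G"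
  shows "A \<subseteq> Idl\<^bsub>R\<lparr>carrier := generate_ring R (insert x B)\<rparr>\<^esub> G"
proof -
  let ?S = "R\<lparr>carrier := generate_ring R (insert x B)\<rparr>"
  interpret S: ring ?S
    by (rule generate_ring_insert_ring)
  have GS: "G \<subseteq> carrier ?S"
    using G ideal_of_subringD(1)[OF A] by auto
  note Idl_closed = ideal_of_subringD[OF S.genideal_ideal[OF GS]]
  have "poly_sum c x n \<in> Idl\<^bsub>?S\<^esub> G" if "\<forall>i. c i \<in> B" "poly_sum c x n \<in> A" for c n
    using that
  proof (induction n arbitrary: c)
    case 0
    show ?case
      using Idl_closed(2) x by simp
  next
    case (Suc d)
    obtain c' where c': "\<forall>i. c' i \<in> B" "c' d = c d" "poly_sum c' x (Suc d) \<in> Idl\<^bsub>?S\<^esub> G"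
      using reduce[OF Suc.prems] by blast
    let ?r = "\<lambda>i. c i \<ominus> c' i"
    have r: "\<forall>i. ?r i \<in> B"
      using Suc.prems(1) c'(1) subringE(5,7)[OF B] by (simp add: a_minus_def)
    have eq: "poly_sum c x (Suc d) = poly_sum ?r x d \<oplus> poly_sum c' x (Suc d)"
      using Suc.prems(1) c'(1,2) subringE(1)[OF B, THEN subsetD] by (intro poly_sum_top_reduce[OF x]) auto
    have c'A: "poly_sum c' x (Suc d) \<in> A"
      using c'(3) S.genideal_minimal[OF A G] by blast
    have "poly_sum ?r x d = poly_sum c x (Suc d) \<oplus> \<ominus> \<one> \<otimes> poly_sum c' x (Suc d)"
      using eq r c'(1) Suc.prems(1) x subringE(1)[OF B, THEN subsetD]
      by (simp add: poly_sum_closed l_minus a_assoc r_neg)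
    also have "\<dots> \<in> A"
      using ideal_of_subringD(3,4)[OF A] Suc.prems(2) c'A subringE(3,5)[OF B] mem_generate_ring_insert(1)
      by blast
    finally have "poly_sum ?r x d \<in> Idl\<^bsub>?S\<^esub> G"
      by (rule Suc.IH[OF r])
    then show ?case
      unfolding eq using Idl_closed(3) c'(3) by blast
  qed
  moreover have "\<exists>c n. (\<forall>i. c i \<in> B) \<and> y = poly_sum c x n" if "y \<in> A" for y
    using that ideal_of_subringD(1)[OF A] generate_ring_insert_poly_sum[OF B x] by (metis subsetD)
  ultimately show ?thesis
    by blast
qed

end

end

lemma top_coeff_reduction:
  assumes B: "subring B R" and x: "x \<in> carrier R"
    and G: "G \<subseteq> generate_ring R (insert x B)" and F: "finite F" "F \<subseteq> B" and "d' \<le> d"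
    and W: "\<And>f. f \<in> F \<Longrightarrow> (\<forall>i. W f i \<in> B) \<and> W f d' = f \<and> poly_sum (W f) x (Suc d') \<in> G"
    and c: "c d \<in> Idl\<^bsub>R\<lparr>carrier := B\<rparr>\<^esub> F"
  shows "\<exists>c'. (\<forall>i. c' i \<in> B) \<and> c' d = c d \<and>
           poly_sum c' x (Suc d) \<in> Idl\<^bsub>R\<lparr>carrier := generate_ring R (insert x B)\<rparr>\<^esub> G"
proof -
  let ?S = "R\<lparr>carrier := generate_ring R (insert x B)\<rparr>"
  interpret S: ring ?S
    by (rule generate_ring_insert_ring[OF B x])
  have GS: "G \<subseteq> carrier ?S"
    using G by simp
  note Idl_closed = ideal_of_subringD[OF S.genideal_ideal[OF GS]]
  define k where "k = d - d'"
  obtain e where e: "e \<in> F \<rightarrow> B" "c d = (\<Oplus>f\<in>F. e f \<otimes> f)"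
    using genideal_subring_finsum[OF B F c] by blast
  have WB: "W f i \<in> B" if "f \<in> F" for f i
    using W[OF that] by blast
  let ?c' = "\<lambda>i. \<Oplus>f\<in>F. e f \<otimes> (if i < k then \<zero> else W f (i - k))"
  have "?c' i \<in> B" for i
    using e(1) WB subringE(2,6)[OF B] F(1) by (intro subring_finsum_closed[OF B]) (auto simp: Pi_iff)
  moreover have "?c' d = c d"
  proof -
    have "\<not> d < k" "d - k = d'"
      unfolding k_def using \<open>d' \<le> d\<close> by auto
    moreover have "e f \<in> carrier R" "f \<in> carrier R" if "f \<in> F" for f
      using e(1) F(2) that subringE(1)[OF B, THEN subsetD] by blast+
    ultimately show ?thesis
      unfolding e(2) using W by (intro finsum_cong') auto
  qed
  moreover have "poly_sum ?c' x (Suc d) = (\<Oplus>f\<in>F. (e f \<otimes> x [^] k) \<otimes> poly_sum (W f) x (Suc d'))"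
  proof -
    have "(\<Oplus>f\<in>F. (e f \<otimes> x [^] k) \<otimes> poly_sum (W f) x (Suc d')) = poly_sum ?c' x (Suc d' + k)"
      by (rule poly_sum_shifted_combination[OF x F(1)])
         (use e(1) WB subringE(1)[OF B, THEN subsetD] in auto)
    then show ?thesis
      unfolding k_def using \<open>d' \<le> d\<close> by simp
  qed
  moreover have "\<dots> \<in> Idl\<^bsub>?S\<^esub> G"
  proof (rule finsum_closed_in)
    fix f assume f: "f \<in> F"
    have "e f \<in> generate_ring R (insert x B)"
      using e(1) f mem_generate_ring_insert(1)[OF B x] by blast
    moreover have "x [^] k \<in> generate_ring R (insert x B)"
      using generate_ring_insert_subring[OF B x] mem_generate_ring_insert(2)[OF B x]
      by (rule subring_nat_pow_closed)
    ultimately have "e f \<otimes> x [^] k \<in> generate_ring R (insert x B)"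
      by (rule subringE(6)[OF generate_ring_insert_subring[OF B x]])
    then show "(e f \<otimes> x [^] k) \<otimes> poly_sum (W f) x (Suc d') \<in> Idl\<^bsub>?S\<^esub> G"
      using Idl_closed(4) S.genideal_self[of G] G W[OF f] by auto
  qed (use Idl_closed F(1) subringE(1)[OF generate_ring_insert_subring[OF B x]] in auto)
  ultimately show ?thesis
    by (intro exI[of _ ?c']) auto
qed

context
  fixes B x
  assumes B: "subring B R" and x: "x \<in> carrier R"
    and noeth: "noetherian_ring (R\<lparr>carrier := B\<rparr>)"
begin

lemma finite_top_coeff_witnesses:
  assumes A: "ideal A (R\<lparr>carrier := generate_ring R (insert x B)\<rparr>)"
  obtains G where "finite G" "G \<subseteq> A"
    "\<And>c d. \<forall>i. c i \<in> B \<Longrightarrow> poly_sum c x (Suc d) \<in> A \<Longrightarrow>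
       \<exists>c'. (\<forall>i. c' i \<in> B) \<and> c' d = c d \<and>
            poly_sum c' x (Suc d) \<in> Idl\<^bsub>R\<lparr>carrier := generate_ring R (insert x B)\<rparr>\<^esub> G"
proof -
  let ?L = "top_coeffs B x A"
  interpret SB: noetherian_ring "R\<lparr>carrier := B\<rparr>"
    by (rule noeth)
  have L: "ideal (?L d) (R\<lparr>carrier := B\<rparr>)" for d
    by (rule top_coeffs_ideal[OF B x A])
  obtain D where D: "\<And>d. D \<le> d \<Longrightarrow> ?L d = ?L D"
    using SB.increasing_ideals_stabilize[of ?L, OF L top_coeffs_mono[OF B x A]] by blast
  have "\<exists>F \<subseteq> B. finite F \<and> ?L d = Idl\<^bsub>R\<lparr>carrier := B\<rparr>\<^esub> F" for d
    using SB.finetely_gen[OF L] by simp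
  then obtain FF where FF: "\<And>d. FF d \<subseteq> B" "\<And>d. finite (FF d)"
    "\<And>d. ?L d = Idl\<^bsub>R\<lparr>carrier := B\<rparr>\<^esub> (FF d)"
    by metis
  have FF_L: "FF d \<subseteq> ?L d" for d
    using SB.genideal_self[of "FF d"] FF(1,3) by simp
  define W where "W d f = (SOME w. (\<forall>i. w i \<in> B) \<and> poly_sum w x (Suc d) \<in> A \<and> w d = f)" for d f
  have W: "(\<forall>i. W d f i \<in> B) \<and> poly_sum (W d f) x (Suc d) \<in> A \<and> W d f d = f" if "f \<in> FF d" for d f
  proof -
    have "\<exists>w. (\<forall>i. w i \<in> B) \<and> poly_sum w x (Suc d) \<in> A \<and> w d = f"
      using FF_L[of d] that unfolding top_coeffs_def by blast
    then show ?thesis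
      unfolding W_def by (rule someI_ex)
  qed
  define G where "G = (\<Union>d\<le>D. (\<lambda>f. poly_sum (W d f) x (Suc d)) ` FF d)"
  have G: "finite G" "G \<subseteq> A"
    using FF(2) W unfolding G_def by auto
  show thesis
  proof (rule that[OF G])
    fix c d assume c: "\<forall>i. c i \<in> B" "poly_sum c x (Suc d) \<in> A"
    define d' where "d' = min d D"
    have "?L d = ?L d'"
      using D[of d] unfolding d'_def by (cases "D \<le> d") (auto simp: min_def)
    moreover have "c d \<in> ?L d"
      unfolding top_coeffs_def using c by blast
    ultimately have cd: "c d \<in> Idl\<^bsub>R\<lparr>carrier := B\<rparr>\<^esub> (FF d')"
      using FF(3) by simp
    have Wd': "(\<forall>i. W d' f i \<in> B) \<and> W d' f d' = f \<and> poly_sum (W d' f) x (Suc d') \<in> G"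
      if "f \<in> FF d'" for f
      using W[OF that] that unfolding G_def d'_def by auto
    have GE: "G \<subseteq> generate_ring R (insert x B)"
      using G(2) ideal_of_subringD(1)[OF A] by simp
    have "d' \<le> d"
      unfolding d'_def by simp
    then show "\<exists>c'. (\<forall>i. c' i \<in> B) \<and> c' d = c d \<and>
        poly_sum c' x (Suc d) \<in> Idl\<^bsub>R\<lparr>carrier := generate_ring R (insert x B)\<rparr>\<^esub> G"
      using top_coeff_reduction[where c = c and d = d, OF B x GE FF(2)[of d'] FF(1)[of d'] _ Wd' cd]
      by blast
  qed
qed

theorem noetherian_generate_ring_insert:
  "noetherian_ring (R\<lparr>carrier := generate_ring R (insert x B)\<rparr>)"
proof -
  let ?S = "R\<lparr>carrier := generate_ring R (insert x B)\<rparr>"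
  interpret S: ring ?S
    by (rule generate_ring_insert_ring[OF B x])
  show ?thesis
  proof (rule S.noetherian_ringI)
    fix A assume A: "ideal A ?S"
    obtain G where G: "finite G" "G \<subseteq> A" and reduce:
      "\<And>c d. \<forall>i. c i \<in> B \<Longrightarrow> poly_sum c x (Suc d) \<in> A \<Longrightarrow>
         \<exists>c'. (\<forall>i. c' i \<in> B) \<and> c' d = c d \<and> poly_sum c' x (Suc d) \<in> Idl\<^bsub>?S\<^esub> G"
      using finite_top_coeff_witnesses[OF A] by blast
    have "A \<subseteq> Idl\<^bsub>?S\<^esub> G"
      using G(2) reduce by (rule subset_genideal_by_top_reduction[OF B x A])
    moreover have "Idl\<^bsub>?S\<^esub> G \<subseteq> A"
      by (rule S.genideal_minimal[OF A G(2)])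
    ultimately show "\<exists>G \<subseteq> carrier ?S. finite G \<and> A = Idl\<^bsub>?S\<^esub> G"
      using G ideal_of_subringD(1)[OF A] by auto
  qed
qed

end

lemma generate_ring_of_subring: "subring B R \<Longrightarrow> generate_ring R B = B"
  using generate_ring_min_subring1[of B B] subringE(1) generate_ring.incl[of _ B R] by blast

lemma generate_ring_insert_generate_ring:
  assumes "insert x H \<subseteq> carrier R"
  shows "generate_ring R (insert x (generate_ring R H)) = generate_ring R (insert x H)"
proof
  have "generate_ring R H \<subseteq> generate_ring R (insert x H)"
    using assms by (intro mono_generate_ring) auto
  then show "generate_ring R (insert x (generate_ring R H)) \<subseteq> generate_ring R (insert x H)"
    using assms generate_ring.incl[of x "insert x H" R]
    by (intro generate_ring_min_subring1 generate_ring_is_subring) (auto simp: generate_ring_incl)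
  show "generate_ring R (insert x H) \<subseteq> generate_ring R (insert x (generate_ring R H))"
    using assms generate_ring.incl[of _ H R] generate_ring_incl[of H]
    by (intro mono_generate_ring) auto
qed

theorem noetherian_generate_ring_Un:
  assumes B: "subring B R" "noetherian_ring (R\<lparr>carrier := B\<rparr>)"
    and X: "finite X" "X \<subseteq> carrier R"
  shows "noetherian_ring (R\<lparr>carrier := generate_ring R (B \<union> X)\<rparr>)"
  using X
proof (induction X rule: finite_induct)
  case empty
  then show ?case
    using B by (simp add: generate_ring_of_subring)
next
  case (insert x X)
  have BX: "B \<union> X \<subseteq> carrier R"
    using insert.prems subringE(1)[OF B(1)] by auto
  have "generate_ring R (B \<union> insert x X) = generate_ring R (insert x (generate_ring R (B \<union> X)))"
    using BX insert.prems by (simp add: generate_ring_insert_generate_ring)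
  then show ?case
    using insert BX
    by (simp add: noetherian_generate_ring_insert generate_ring_is_subring)
qed

end

context cring
begin

definition vecs :: "'a set \<Rightarrow> nat \<Rightarrow> (nat \<Rightarrow> 'a) set" where
  "vecs B s = {v. (\<forall>i<s. v i \<in> B) \<and> (\<forall>i\<ge>s. v i = \<zero>)}"

definition vec_submodule :: "'a set \<Rightarrow> nat \<Rightarrow> (nat \<Rightarrow> 'a) set \<Rightarrow> bool" where
  "vec_submodule B s M \<longleftrightarrow> M \<subseteq> vecs B s \<and> (\<lambda>_. \<zero>) \<in> M \<and>
     (\<forall>v\<in>M. \<forall>w\<in>M. (\<lambda>i. v i \<oplus> w i) \<in> M) \<and> (\<forall>r\<in>B. \<forall>v\<in>M. (\<lambda>i. r \<otimes> v i) \<in> M)"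

definition vec_span :: "'a set \<Rightarrow> (nat \<Rightarrow> 'a) set \<Rightarrow> (nat \<Rightarrow> 'a) set" where
  "vec_span B F = {(\<lambda>i. \<Oplus>f\<in>F. c f \<otimes> f i) | c. c \<in> F \<rightarrow> B}"

lemma vec_submoduleD:
  assumes "vec_submodule B s M"
  shows "M \<subseteq> vecs B s" "(\<lambda>_. \<zero>) \<in> M" "v \<in> M \<Longrightarrow> w \<in> M \<Longrightarrow> (\<lambda>i. v i \<oplus> w i) \<in> M"
    "r \<in> B \<Longrightarrow> v \<in> M \<Longrightarrow> (\<lambda>i. r \<otimes> v i) \<in> M"
  using assms unfolding vec_submodule_def by auto

context
  fixes B
  assumes B: "subring B R"
begin

lemma vecs_carrier: "v \<in> vecs B s \<Longrightarrow> v i \<in> carrier R"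
  unfolding vecs_def using subringE(1,2)[OF B] by (cases "i < s") auto

lemma vec_submodule_finsum:
  assumes M: "vec_submodule B s M" and A: "finite A"
    and g: "\<And>a. a \<in> A \<Longrightarrow> g a \<in> M" and r: "\<And>a. a \<in> A \<Longrightarrow> r a \<in> B"
  shows "(\<lambda>i. \<Oplus>a\<in>A. r a \<otimes> g a i) \<in> M"
  using A g r
proof (induction A rule: finite_induct)
  case empty
  then show ?case
    using vec_submoduleD(2)[OF M] by simp
next
  case (insert a A)
  have "g b i \<in> carrier R" "r b \<in> carrier R" if "b \<in> insert a A" for b i
    using insert.prems(1)[OF that] insert.prems(2)[OF that] vec_submoduleD(1)[OF M]
      vecs_carrier subringE(1)[OF B] by auto
  then have carr: "r b \<otimes> g b i \<in> carrier R" if "b \<in> insert a A" for b i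
    using that by simp
  have "(\<lambda>i. \<Oplus>b\<in>insert a A. r b \<otimes> g b i) = (\<lambda>i. r a \<otimes> g a i \<oplus> (\<Oplus>b\<in>A. r b \<otimes> g b i))"
    using insert carr by (simp add: Pi_iff)
  also have "\<dots> \<in> M"
    using insert vec_submoduleD[OF M] by simp
  finally show ?case .
qed

lemma vec_span_subset:
  assumes "vec_submodule B s M" "finite F" "F \<subseteq> M"
  shows "vec_span B F \<subseteq> M"
proof
  fix v assume "v \<in> vec_span B F"
  then obtain c where c: "c \<in> F \<rightarrow> B" "v = (\<lambda>i. \<Oplus>f\<in>F. c f \<otimes> f i)"
    unfolding vec_span_def by blast
  show "v \<in> M"
    unfolding c(2) using c(1) assms(3)
    by (intro vec_submodule_finsum[OF assms(1,2), where g = "\<lambda>f. f"]) auto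
qed

lemma vec_span_subset_vecs:
  assumes F: "finite F" "F \<subseteq> vecs B s"
  shows "vec_span B F \<subseteq> vecs B s"
proof
  have Bc: "b \<in> carrier R" if "b \<in> B" for b
    using subringE(1)[OF B] that by blast
  fix v assume "v \<in> vec_span B F"
  then obtain c where c: "c \<in> F \<rightarrow> B" "v = (\<lambda>i. \<Oplus>f\<in>F. c f \<otimes> f i)"
    unfolding vec_span_def by blast
  have "c f \<otimes> f i \<in> B" if "f \<in> F" "i < s" for f i
    using c(1) that F(2) subringE(6)[OF B] unfolding vecs_def by blast
  then have "v i \<in> B" if "i < s" for i
    unfolding c(2) using that F(1) by (intro subring_finsum_closed[OF B]) auto
  moreover have "v i = \<zero>" if "s \<le> i" for i
  proof -
    have "c f \<otimes> f i = \<zero>" if "f \<in> F" for f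
    proof -
      have "f i = \<zero>"
        using F(2) that \<open>s \<le> i\<close> unfolding vecs_def by blast
      moreover have "c f \<in> carrier R"
        using c(1) that Bc by blast
      ultimately show ?thesis by simp
    qed
    then have "v i = (\<Oplus>f\<in>F. \<zero>)"
      unfolding c(2) by (intro finsum_cong') auto
    then show ?thesis
      by simp
  qed
  ultimately show "v \<in> vecs B s"
    unfolding vecs_def by blast
qed

lemma vec_span_submodule:
  assumes F: "finite F" "F \<subseteq> vecs B s"
  shows "vec_submodule B s (vec_span B F)"
  unfolding vec_submodule_def
proof (intro conjI ballI)
  have Fc: "f i \<in> carrier R" if "f \<in> F" for f i
    using F(2) that vecs_carrier by blast
  have Bc: "b \<in> carrier R" if "b \<in> B" for b
    using subringE(1)[OF B] that by blast
  show "vec_span B F \<subseteq> vecs B s"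
    by (rule vec_span_subset_vecs[OF F])
  have "(\<Oplus>f\<in>F. \<zero> \<otimes> f i) = \<zero>" for i
    using Fc by (intro finsum_lincomb_zero)
  then show "(\<lambda>_. \<zero>) \<in> vec_span B F"
    unfolding vec_span_def using subringE(2)[OF B]
    by (intro CollectI exI[of _ "\<lambda>_. \<zero>"]) auto
  show "(\<lambda>i. v i \<oplus> w i) \<in> vec_span B F" if v: "v \<in> vec_span B F" and w: "w \<in> vec_span B F" for v w
  proof -
    obtain c d where c: "c \<in> F \<rightarrow> B" "v = (\<lambda>i. \<Oplus>f\<in>F. c f \<otimes> f i)"
      and d: "d \<in> F \<rightarrow> B" "w = (\<lambda>i. \<Oplus>f\<in>F. d f \<otimes> f i)"
      using v w unfolding vec_span_def by blast
    have "v i \<oplus> w i = (\<Oplus>f\<in>F. (c f \<oplus> d f) \<otimes> f i)" for i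
      unfolding c(2) d(2) using c(1) d(1) Bc Fc by (intro finsum_lincomb_add) auto
    then show ?thesis
      unfolding vec_span_def using c(1) d(1) subringE(7)[OF B]
      by (intro CollectI exI[of _ "\<lambda>f. c f \<oplus> d f"]) (auto simp: Pi_iff)
  qed
  show "(\<lambda>i. r \<otimes> v i) \<in> vec_span B F" if r: "r \<in> B" and v: "v \<in> vec_span B F" for r v
  proof -
    obtain c where c: "c \<in> F \<rightarrow> B" "v = (\<lambda>i. \<Oplus>f\<in>F. c f \<otimes> f i)"
      using v unfolding vec_span_def by blast
    have "r \<otimes> v i = (\<Oplus>f\<in>F. (r \<otimes> c f) \<otimes> f i)" for i
      unfolding c(2) using c(1) r F(1) Bc Fc by (intro finsum_lincomb_smult) auto
    then show ?thesis
      unfolding vec_span_def using c(1) r subringE(6)[OF B]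
      by (intro CollectI exI[of _ "\<lambda>f. r \<otimes> c f"]) (auto simp: Pi_iff)
  qed
qed

lemma vec_span_self:
  assumes "finite F" "F \<subseteq> vecs B s" "f \<in> F"
  shows "f \<in> vec_span B F"
proof -
  have "g i \<in> carrier R" if "g \<in> F" for g i
    using assms(2) that vecs_carrier by blast
  then have "(\<Oplus>g\<in>F. (if g = f then \<one> else \<zero>) \<otimes> g i) = f i" for i
    using finsum_lincomb_delta[OF assms(1,3), of "\<lambda>g. g i"] by blast
  then show ?thesis
    unfolding vec_span_def using subringE(2,3)[OF B]
    by (intro CollectI exI[of _ "\<lambda>g. if g = f then \<one> else \<zero>"]) auto
qed

lemma vec_submodule_last_coord_ideal:
  assumes M: "vec_submodule B (Suc s) M"
  shows "ideal ((\<lambda>v. v s) ` M) (R\<lparr>carrier := B\<rparr>)"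
proof (rule ideal_of_subringI[OF B])
  show "(\<lambda>v. v s) ` M \<subseteq> B"
    using vec_submoduleD(1)[OF M] unfolding vecs_def by auto
  show "\<zero> \<in> (\<lambda>v. v s) ` M"
    using vec_submoduleD(2)[OF M] by force
  show "a \<oplus> b \<in> (\<lambda>v. v s) ` M" if "a \<in> (\<lambda>v. v s) ` M" "b \<in> (\<lambda>v. v s) ` M" for a b
    using that vec_submoduleD(3)[OF M] by force
  show "r \<otimes> a \<in> (\<lambda>v. v s) ` M" if "r \<in> B" "a \<in> (\<lambda>v. v s) ` M" for r a
    using that vec_submoduleD(4)[OF M] by force
qed

lemma vec_submodule_last_coord_zero:
  assumes M: "vec_submodule B (Suc s) M"
  shows "vec_submodule B s {v \<in> M. v s = \<zero>}"
  unfolding vec_submodule_def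
proof (intro conjI ballI)
  show "{v \<in> M. v s = \<zero>} \<subseteq> vecs B s"
  proof
    fix v assume "v \<in> {v \<in> M. v s = \<zero>}"
    then have "v \<in> vecs B (Suc s)" "v s = \<zero>"
      using vec_submoduleD(1)[OF M] by auto
    moreover have "i \<ge> s \<Longrightarrow> i = s \<or> i \<ge> Suc s" for i
      by auto
    ultimately show "v \<in> vecs B s"
      unfolding vecs_def by auto
  qed
  show "(\<lambda>_. \<zero>) \<in> {v \<in> M. v s = \<zero>}"
    using vec_submoduleD(2)[OF M] by simp
  show "(\<lambda>i. v i \<oplus> w i) \<in> {v \<in> M. v s = \<zero>}" if "v \<in> {v \<in> M. v s = \<zero>}" "w \<in> {v \<in> M. v s = \<zero>}" for v w
    using that vec_submoduleD(3)[OF M, of v w] by simp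
  show "(\<lambda>i. r \<otimes> v i) \<in> {v \<in> M. v s = \<zero>}" if "r \<in> B" "v \<in> {v \<in> M. v s = \<zero>}" for r v
    using that vec_submoduleD(4)[OF M, of r v] subringE(1)[OF B] by auto
qed

lemma vec_submodule_subset_span:
  assumes M: "vec_submodule B (Suc s) M" and G: "finite G" "G \<subseteq> vecs B (Suc s)"
    and zero_part: "{v \<in> M. v s = \<zero>} \<subseteq> vec_span B G"
    and last: "\<And>v. v \<in> M \<Longrightarrow> \<exists>w \<in> M \<inter> vec_span B G. w s = v s"
  shows "M \<subseteq> vec_span B G"
proof
  fix v assume v: "v \<in> M"
  obtain w where w: "w \<in> M" "w \<in> vec_span B G" "w s = v s"
    using last[OF v] by blast
  have V: "vec_submodule B (Suc s) (vec_span B G)"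
    by (rule vec_span_submodule[OF G])
  have Mc: "u i \<in> carrier R" if "u \<in> M" for u i
    using vec_submoduleD(1)[OF M] that vecs_carrier by blast
  define u where "u = (\<lambda>i. v i \<oplus> \<ominus> \<one> \<otimes> w i)"
  have "u \<in> M"
    unfolding u_def using vec_submoduleD(3)[OF M v vec_submoduleD(4)[OF M _ w(1)]] subringE(3,5)[OF B]
    by blast
  moreover have "u s = \<zero>"
    unfolding u_def using w(3) Mc[OF v] by (simp add: l_minus r_neg)
  ultimately have "u \<in> vec_span B G"
    using zero_part by blast
  moreover have "v = (\<lambda>i. w i \<oplus> u i)"
    unfolding u_def using Mc[OF v] Mc[OF w(1)] by (auto simp: l_minus a_lcomm[of "w _"] r_neg)
  ultimately show "v \<in> vec_span B G"
    using vec_submoduleD(3)[OF V w(2)] by simp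
qed

lemma vec_submodule_lift_last_coord:
  assumes M: "vec_submodule B (Suc s) M" and V: "vec_submodule B (Suc s) V"
    and F: "finite F" "F \<subseteq> B" "(\<lambda>v. v s) ` M \<subseteq> Idl\<^bsub>R\<lparr>carrier := B\<rparr>\<^esub> F"
    and pre: "\<And>p. p \<in> F \<Longrightarrow> pre p \<in> M \<inter> V \<and> pre p s = p"
    and v: "v \<in> M"
  shows "\<exists>w \<in> M \<inter> V. w s = v s"
proof -
  obtain c where c: "c \<in> F \<rightarrow> B" "v s = (\<Oplus>p\<in>F. c p \<otimes> p)"
    using genideal_subring_finsum[OF B F(1,2)] F(3) v by blast
  define w where "w = (\<lambda>i. \<Oplus>p\<in>F. c p \<otimes> pre p i)"
  have "w \<in> M" "w \<in> V"
    unfolding w_def using pre c(1)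
    by (auto intro!: vec_submodule_finsum[OF M F(1)] vec_submodule_finsum[OF V F(1)])
  moreover have "c p \<in> carrier R" "p \<in> carrier R" if "p \<in> F" for p
    using c(1) F(2) subringE(1)[OF B] that by blast+
  then have "w s = v s"
    unfolding w_def c(2) using pre by (intro finsum_cong') auto
  ultimately show ?thesis
    by blast
qed

theorem vec_submodule_finitely_generated:
  assumes noeth: "noetherian_ring (R\<lparr>carrier := B\<rparr>)" and M: "vec_submodule B s M"
  obtains F where "finite F" "F \<subseteq> M" "M \<subseteq> vec_span B F"
proof -
  interpret SB: noetherian_ring "R\<lparr>carrier := B\<rparr>"
    by (rule noeth)
  have "\<exists>F. finite F \<and> F \<subseteq> M \<and> M \<subseteq> vec_span B F"
    using M
  proof (induction s arbitrary: M)
    case 0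
    have "M \<subseteq> vec_span B {}"
      using vec_submoduleD(1)[OF "0.prems"] unfolding vecs_def vec_span_def by auto
    then show ?case
      by blast
  next
    case (Suc s)
    note M = Suc.prems
    obtain F1 where F1: "F1 \<subseteq> B" "finite F1" "(\<lambda>v. v s) ` M = Idl\<^bsub>R\<lparr>carrier := B\<rparr>\<^esub> F1"
      using SB.finetely_gen[OF vec_submodule_last_coord_ideal[OF M]] by auto
    have "F1 \<subseteq> (\<lambda>v. v s) ` M"
      using SB.genideal_self[of F1] F1 by simp
    then have "\<forall>p\<in>F1. \<exists>v. v \<in> M \<and> v s = p"
      by blast
    then have "\<exists>pre. \<forall>p\<in>F1. pre p \<in> M \<and> pre p s = p"
      by (rule bchoice)
    then obtain pre where pre: "\<forall>p\<in>F1. pre p \<in> M \<and> pre p s = p"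
      by blast
    obtain F2 where F2: "finite F2" "F2 \<subseteq> {v \<in> M. v s = \<zero>}" "{v \<in> M. v s = \<zero>} \<subseteq> vec_span B F2"
      using Suc.IH[OF vec_submodule_last_coord_zero[OF M]] by blast
    define G where "G = pre ` F1 \<union> F2"
    have G: "finite G" "G \<subseteq> M"
      unfolding G_def using pre F1(2) F2(1,2) by auto
    have GV: "G \<subseteq> vecs B (Suc s)"
      using G(2) vec_submoduleD(1)[OF M] by blast
    have V: "vec_submodule B (Suc s) (vec_span B G)"
      by (rule vec_span_submodule[OF G(1) GV])
    have "G \<subseteq> vec_span B G"
      using vec_span_self[OF G(1) GV] by blast
    then have "vec_span B F2 \<subseteq> vec_span B G"
      using vec_span_subset[OF V F2(1)] unfolding G_def by blast
    have "M \<subseteq> vec_span B G"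
    proof (rule vec_submodule_subset_span[OF M G(1) GV])
      show "{v \<in> M. v s = \<zero>} \<subseteq> vec_span B G"
        using F2(3) \<open>vec_span B F2 \<subseteq> vec_span B G\<close> by blast
      have preV: "pre p \<in> M \<inter> vec_span B G \<and> pre p s = p" if "p \<in> F1" for p
        using pre \<open>G \<subseteq> vec_span B G\<close> that unfolding G_def by blast
      show "\<exists>w \<in> M \<inter> vec_span B G. w s = v s" if "v \<in> M" for v
        using F1(3) by (rule vec_submodule_lift_last_coord[OF M V F1(2,1) equalityD1 preV that])
    qed
    then show ?case
      using G by blast
  qed
  then show thesis
    using that by blast
qed

end

end

context UP_cring
begin

definition rees_algebra :: "'a set \<Rightarrow> (nat \<Rightarrow> 'a) set" where
  "rees_algebra I = {p \<in> carrier P. \<forall>n. coeff P p n \<in> ideal_pow R I n}"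

context
  fixes I
  assumes I: "ideal I R"
begin

lemma rees_algebra_subring: "subring (rees_algebra I) P"
proof (rule P.subringI)
  note pow_ideal = R.ideal_pow_is_ideal[OF I]
  show "rees_algebra I \<subseteq> carrier P"
    unfolding rees_algebra_def by blast
  show "\<one>\<^bsub>P\<^esub> \<in> rees_algebra I"
    unfolding rees_algebra_def using R.ideal_pow_zero_closed[OF I] by auto
  show "\<ominus>\<^bsub>P\<^esub> p \<in> rees_algebra I" if "p \<in> rees_algebra I" for p
    using that pow_ideal
    by (auto simp: rees_algebra_def additive_subgroup.a_inv_closed ideal.axioms(1))
  show "p \<oplus>\<^bsub>P\<^esub> q \<in> rees_algebra I" if "p \<in> rees_algebra I" "q \<in> rees_algebra I" for p q
    using that pow_ideal
    by (auto simp: rees_algebra_def additive_subgroup.a_closed ideal.axioms(1))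
  show "p \<otimes>\<^bsub>P\<^esub> q \<in> rees_algebra I" if p: "p \<in> rees_algebra I" and q: "q \<in> rees_algebra I" for p q
  proof -
    have pq: "p \<in> carrier P" "q \<in> carrier P"
      using p q unfolding rees_algebra_def by auto
    have "coeff P (p \<otimes>\<^bsub>P\<^esub> q) n \<in> ideal_pow R I n" for n
    proof -
      have "coeff P p i \<otimes> coeff P q (n - i) \<in> ideal_pow R I n" if "i \<in> {..n}" for i
        using R.ideal_pow_mult_mem[OF I, of "coeff P p i" i "coeff P q (n - i)" "n - i"] p q that
        unfolding rees_algebra_def by auto
      then have "(\<Oplus>i\<in>{..n}. coeff P p i \<otimes> coeff P q (n - i)) \<in> ideal_pow R I n"
        by (intro R.ideal_finsum_closed[OF pow_ideal]) auto
      then show ?thesis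
        using pq by simp
    qed
    then show ?thesis
      using pq unfolding rees_algebra_def by simp
  qed
qed

lemma monom_in_rees_algebra: "c \<in> ideal_pow R I n \<Longrightarrow> monom P c n \<in> rees_algebra I"
  using R.ideal_pow_zero_closed[OF I] ideal.Icarr[OF R.ideal_pow_is_ideal[OF I]]
  unfolding rees_algebra_def by auto

end

lemma const_ring_hom_cring: "ring_hom_cring R P (\<lambda>c. monom P c 0)"
  by (intro ring_hom_cringI R.cring_axioms P.cring_axioms const_ring_hom)

lemma monom_preimage_ideal:
  assumes T: "subring T P" and constants: "(\<lambda>c. monom P c 0) ` carrier R \<subseteq> T"
  shows "ideal {c \<in> carrier R. monom P c n \<in> T} R"
proof (rule R.cring_idealI)
  show "\<zero> \<in> {c \<in> carrier R. monom P c n \<in> T}"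
    using subringE(2)[OF T] by simp
  show "a \<oplus> b \<in> {c \<in> carrier R. monom P c n \<in> T}"
    if "a \<in> {c \<in> carrier R. monom P c n \<in> T}" "b \<in> {c \<in> carrier R. monom P c n \<in> T}" for a b
    using that subringE(7)[OF T] by simp
  show "r \<otimes> a \<in> {c \<in> carrier R. monom P c n \<in> T}"
    if "r \<in> carrier R" "a \<in> {c \<in> carrier R. monom P c n \<in> T}" for r a
    using that subringE(6)[OF T, of "monom P r 0" "monom P a n"] constants
    by (auto simp: monom_mult[of r a 0 n, simplified])
qed auto

lemma monom_in_generate_ring:
  assumes G: "G \<subseteq> carrier R" and c: "c \<in> ideal_pow R (Idl G) n"
  shows "monom P c n \<in> generate_ring P ((\<lambda>c. monom P c 0) ` carrier R \<union> (\<lambda>g. monom P g 1) ` G)"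
    (is "_ \<in> ?T")
proof -
  have I: "ideal (Idl G) R"
    by (rule R.genideal_ideal[OF G])
  have T: "subring ?T P"
    using G by (intro P.generate_ring_is_subring) auto
  have HT: "(\<lambda>c. monom P c 0) ` carrier R \<union> (\<lambda>g. monom P g 1) ` G \<subseteq> ?T"
    by (auto intro: generate_ring.incl)
  define M where "M n = {c \<in> carrier R. monom P c n \<in> ?T}" for n
  have M: "ideal (M n) R" for n
    unfolding M_def using T HT by (intro monom_preimage_ideal) auto
  have "Idl G \<subseteq> M 1"
    using HT G by (intro R.genideal_minimal[OF M]) (auto simp: M_def)
  have "ideal_pow R (Idl G) n \<subseteq> M n"
  proof (induction n)
    case 0
    show ?case
      using HT unfolding M_def by auto
  next
    case (Suc n)
    have "(Idl G) \<cdot>\<^bsub>R\<^esub> ideal_pow R (Idl G) n \<subseteq> M (Suc n)"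
    proof (rule R.ideal_prod_subsetI[OF M])
      fix a b assume a: "a \<in> Idl G" and b: "b \<in> ideal_pow R (Idl G) n"
      have carr: "a \<in> carrier R" "b \<in> carrier R"
        using ideal.Icarr[OF I a] ideal.Icarr[OF R.ideal_pow_is_ideal[OF I] b] .
      have "monom P a 1 \<otimes>\<^bsub>P\<^esub> monom P b n \<in> ?T"
        using a b \<open>Idl G \<subseteq> M 1\<close> Suc subringE(6)[OF T] unfolding M_def by blast
      then show "a \<otimes> b \<in> M (Suc n)"
        using carr monom_mult[of a b 1 n] unfolding M_def by simp
    qed
    then show ?case
      by simp
  qed
  then show ?thesis
    using c unfolding M_def by blast
qed

lemma rees_algebra_eq_generate_ring:
  assumes G: "G \<subseteq> carrier R"
  shows "rees_algebra (Idl G)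
           = generate_ring P ((\<lambda>c. monom P c 0) ` carrier R \<union> (\<lambda>g. monom P g 1) ` G)"
    (is "_ = ?T")
proof
  have I: "ideal (Idl G) R"
    by (rule R.genideal_ideal[OF G])
  have T: "subring ?T P"
    using G by (intro P.generate_ring_is_subring) auto
  show "?T \<subseteq> rees_algebra (Idl G)"
  proof (rule P.generate_ring_min_subring1[OF _ rees_algebra_subring[OF I]])
    show "(\<lambda>c. monom P c 0) ` carrier R \<union> (\<lambda>g. monom P g 1) ` G \<subseteq> rees_algebra (Idl G)"
      using monom_in_rees_algebra[OF I] R.ideal_pow_one[OF I] R.genideal_self[OF G]
      by auto
  qed (use G in auto)
  show "rees_algebra (Idl G) \<subseteq> ?T"
  proof
    fix p assume p: "p \<in> rees_algebra (Idl G)"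
    then have "p = (\<Oplus>\<^bsub>P\<^esub>i\<in>{..deg R p}. monom P (coeff P p i) i)"
      unfolding rees_algebra_def by (simp add: up_repr)
    also have "\<dots> \<in> ?T"
      using p monom_in_generate_ring[OF G] unfolding rees_algebra_def
      by (intro P.subring_finsum_closed[OF T]) auto
    finally show "p \<in> ?T" .
  qed
qed

theorem noetherian_rees_algebra:
  assumes "noetherian_ring R" "finite G" "G \<subseteq> carrier R"
  shows "noetherian_ring (P\<lparr>carrier := rees_algebra (Idl G)\<rparr>)"
proof -
  interpret h: ring_hom_cring R P "\<lambda>c. monom P c 0"
    by (rule const_ring_hom_cring)
  have "subring ((\<lambda>c. monom P c 0) ` carrier R) P"
    by (rule h.ring.img_is_subring[OF R.carrier_is_subring])
  then show ?thesis
    unfolding rees_algebra_eq_generate_ring[OF assms(3)]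
    using h.noetherian_ring_img[OF assms(1)] assms(2,3)
    by (intro P.noetherian_generate_ring_Un) auto
qed

end

context cring
begin

definition lifts :: "'a set \<Rightarrow> (nat \<Rightarrow> 'a) \<Rightarrow> nat \<Rightarrow> 'a \<Rightarrow> (nat \<Rightarrow> 'a) \<Rightarrow> bool" where
  "lifts J a s r k \<longleftrightarrow> r \<in> carrier R \<and> (\<forall>i<s. a i \<otimes> r \<ominus> k i \<in> J)"

lemma lifts_cong: "(\<And>i. i < s \<Longrightarrow> k i = k' i) \<Longrightarrow> lifts J a s r k = lifts J a s r k'"
  by (simp add: lifts_def)

context
  fixes J :: "'a set" and a :: "nat \<Rightarrow> 'a" and s :: nat
  assumes J: "ideal J R" and gens: "a ` {..<s} \<subseteq> carrier R"
begin

lemma lifts_zero: "lifts J a s \<zero> (\<lambda>_. \<zero>)"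
  using gens additive_subgroup.zero_closed[OF ideal.axioms(1)[OF J]]
  by (auto simp: lifts_def a_minus_def)

lemma lifts_add:
  assumes "lifts J a s r k" "lifts J a s r' k'" "\<And>i. k i \<in> carrier R" "\<And>i. k' i \<in> carrier R"
  shows "lifts J a s (r \<oplus> r') (\<lambda>i. k i \<oplus> k' i)"
  unfolding lifts_def
proof (intro conjI allI impI)
  show "r \<oplus> r' \<in> carrier R"
    using assms(1,2) by (simp add: lifts_def)
  fix i assume i: "i < s"
  have "a i \<in> carrier R"
    using gens i by auto
  then have "a i \<otimes> (r \<oplus> r') \<ominus> (k i \<oplus> k' i) = (a i \<otimes> r \<ominus> k i) \<oplus> (a i \<otimes> r' \<ominus> k' i)"
    using assms unfolding lifts_def by algebra
  also have "\<dots> \<in> J"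
    using assms(1,2) i additive_subgroup.a_closed[OF ideal.axioms(1)[OF J]] by (simp add: lifts_def)
  finally show "a i \<otimes> (r \<oplus> r') \<ominus> (k i \<oplus> k' i) \<in> J" .
qed

lemma lifts_smult:
  assumes "lifts J a s r k" "\<And>i. k i \<in> carrier R" "c \<in> carrier R"
  shows "lifts J a s (c \<otimes> r) (\<lambda>i. c \<otimes> k i)"
  unfolding lifts_def
proof (intro conjI allI impI)
  show "c \<otimes> r \<in> carrier R"
    using assms by (simp add: lifts_def)
  fix i assume i: "i < s"
  have "a i \<in> carrier R"
    using gens i by auto
  then have "a i \<otimes> (c \<otimes> r) \<ominus> c \<otimes> k i = c \<otimes> (a i \<otimes> r \<ominus> k i)"
    using assms unfolding lifts_def by algebra
  also have "\<dots> \<in> J"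
    using assms i ideal.I_l_closed[OF J] by (simp add: lifts_def)
  finally show "a i \<otimes> (c \<otimes> r) \<ominus> c \<otimes> k i \<in> J" .
qed

lemma lifts_finsum:
  assumes "finite E" "\<And>e. e \<in> E \<Longrightarrow> lifts J a s (r e) (k e)"
    and "\<And>e i. e \<in> E \<Longrightarrow> k e i \<in> carrier R"
  shows "lifts J a s (\<Oplus>e\<in>E. r e) (\<lambda>i. \<Oplus>e\<in>E. k e i)"
  using assms
proof (induction E rule: finite_induct)
  case empty
  then show ?case
    using lifts_zero by simp
next
  case (insert e E)
  have r: "r f \<in> carrier R" if "f \<in> insert e E" for f
    using insert.prems(1)[OF that] by (simp add: lifts_def)
  have "lifts J a s (r e \<oplus> (\<Oplus>f\<in>E. r f)) (\<lambda>i. k e i \<oplus> (\<Oplus>f\<in>E. k f i))"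
    using insert by (intro lifts_add finsum_closed) auto
  then show ?case
    using insert r by (simp add: Pi_iff)
qed

lemma lifts_diff_mem_colon:
  assumes "lifts J a s r k" "lifts J a s r' k" "\<And>i. i < s \<Longrightarrow> k i \<in> carrier R"
  shows "r \<ominus> r' \<in> ideal_colon R J (Idl (a ` {..<s}))"
proof (rule mem_ideal_colon_genideal[OF J])
  show "a ` {..<s} \<subseteq> carrier R" "r \<ominus> r' \<in> carrier R"
    using gens assms(1,2) by (auto simp: lifts_def)
  fix g assume "g \<in> a ` {..<s}"
  then obtain i where i: "i < s" "g = a i"
    by blast
  have carr: "a i \<in> carrier R" "r \<in> carrier R" "r' \<in> carrier R" "k i \<in> carrier R"
    using gens assms i(1) by (auto simp: lifts_def)
  have "(r \<ominus> r') \<otimes> a i = (a i \<otimes> r \<ominus> k i) \<ominus> (a i \<otimes> r' \<ominus> k i)"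
    using carr by algebra
  also have "\<dots> \<in> J"
    using assms(1,2) i J unfolding lifts_def a_minus_def
    by (simp add: additive_subgroup.a_closed additive_subgroup.a_inv_closed ideal.axioms(1))
  finally show "(r \<ominus> r') \<otimes> g \<in> J"
    using i by simp
qed

lemma lifts_zero_mem_colon:
  assumes "lifts J a s r (\<lambda>_. \<zero>)"
  shows "r \<in> ideal_colon R J (Idl (a ` {..<s}))"
  using lifts_diff_mem_colon[OF assms lifts_zero] assms by (simp add: lifts_def a_minus_def)

lemma lifts_of_mem_colon_sum:
  assumes Y: "ideal Y R" and r: "r \<in> ideal_colon R (J <+>\<^bsub>R\<^esub> Y) (Idl (a ` {..<s}))"
  obtains k where "\<And>i. i < s \<Longrightarrow> k i \<in> Y" "lifts J a s r k"
proof -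
  have "\<exists>y\<in>Y. a i \<otimes> r \<ominus> y \<in> J" if i: "i < s" for i
  proof -
    have "a i \<in> Idl (a ` {..<s})"
      using genideal_self[OF gens] i by auto
    then have "r \<otimes> a i \<in> J <+>\<^bsub>R\<^esub> Y"
      using r by (simp add: ideal_colon_def)
    then obtain j y where jy: "j \<in> J" "y \<in> Y" "r \<otimes> a i = j \<oplus> y"
      by (auto simp: mem_set_add_iff)
    have "r \<in> carrier R" "j \<in> carrier R" "y \<in> carrier R" "a i \<in> carrier R"
      using jy r ideal.Icarr[OF J] ideal.Icarr[OF Y] gens i by (auto simp: ideal_colon_def)
    then have "a i \<otimes> r \<ominus> y = j"
      using jy(3) by algebra
    then show ?thesis
      using jy by auto
  qed
  then obtain k where "\<forall>i<s. k i \<in> Y \<and> a i \<otimes> r \<ominus> k i \<in> J"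
    by metis
  then show thesis
    using r that by (auto simp: lifts_def ideal_colon_def)
qed

lemma mem_colon_sum_of_lifts:
  assumes Y: "ideal Y R" and k: "\<And>i. i < s \<Longrightarrow> k i \<in> Y" "lifts J a s r k"
  shows "r \<in> ideal_colon R (J <+>\<^bsub>R\<^esub> Y) (Idl (a ` {..<s}))"
proof (rule mem_ideal_colon_genideal[OF add_ideals[OF J Y]])
  show "a ` {..<s} \<subseteq> carrier R" "r \<in> carrier R"
    using gens k(2) by (auto simp: lifts_def)
  fix g assume "g \<in> a ` {..<s}"
  then obtain i where i: "i < s" "g = a i"
    by blast
  have carr: "a i \<in> carrier R" "r \<in> carrier R" "k i \<in> carrier R"
    using gens k i ideal.Icarr[OF Y] by (auto simp: lifts_def)
  have "r \<otimes> a i = (a i \<otimes> r \<ominus> k i) \<oplus> k i"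
    using carr by algebra
  then show "r \<otimes> g \<in> J <+>\<^bsub>R\<^esub> Y"
    using k i unfolding lifts_def mem_set_add_iff by auto
qed

end

end

context UP_cring
begin

lemma coeff_finsum_mult:
  assumes "finite F" "\<And>g. g \<in> F \<Longrightarrow> p g \<in> carrier P" "\<And>g. g \<in> F \<Longrightarrow> q g \<in> carrier P"
  shows "coeff P (\<Oplus>\<^bsub>P\<^esub>g\<in>F. p g \<otimes>\<^bsub>P\<^esub> q g) n
           = (\<Oplus>g\<in>F. \<Oplus>e\<in>{..n}. coeff P (p g) e \<otimes> coeff P (q g) (n - e))"
proof -
  have "coeff P (\<Oplus>\<^bsub>P\<^esub>g\<in>F. p g \<otimes>\<^bsub>P\<^esub> q g) n = (\<Oplus>g\<in>F. coeff P (p g \<otimes>\<^bsub>P\<^esub> q g) n)"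
    using assms by (intro coeff_finsum) auto
  also have "\<dots> = (\<Oplus>g\<in>F. \<Oplus>e\<in>{..n}. coeff P (p g) e \<otimes> coeff P (q g) (n - e))"
    using assms by (intro R.finsum_cong') (auto intro!: R.finsum_closed)
  finally show ?thesis .
qed

context
  fixes J K :: "'a set" and a :: "nat \<Rightarrow> 'a" and s :: nat and I :: "'a set"
  assumes J: "ideal J R" and K: "ideal K R" and gens: "a ` {..<s} \<subseteq> carrier R"
    and I_def: "I = Idl (a ` {..<s})"
begin

lemma gen_ideal: "ideal I R"
  unfolding I_def using gens by (rule R.genideal_ideal)

lemma pow_prod_ideal: "ideal (ideal_pow R I d \<cdot>\<^bsub>R\<^esub> K) R"
  by (rule R.ideal_prod_is_ideal[OF R.ideal_pow_is_ideal[OF gen_ideal] K])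

definition colon_module :: "(nat \<Rightarrow> nat \<Rightarrow> 'a) set" where
  "colon_module = {v \<in> P.vecs (rees_algebra I) s.
     \<forall>d. (\<forall>i<s. coeff P (v i) d \<in> ideal_pow R I d \<cdot>\<^bsub>R\<^esub> K) \<and>
         (\<exists>r. R.lifts J a s r (\<lambda>i. coeff P (v i) d))}"

lemma colon_module_vecs: "v \<in> colon_module \<Longrightarrow> v \<in> P.vecs (rees_algebra I) s"
  by (simp add: colon_module_def)

lemma colon_module_carrier: "v \<in> colon_module \<Longrightarrow> v i \<in> carrier P"
  using P.vecs_carrier[OF rees_algebra_subring[OF gen_ideal]] colon_module_vecs by blast

lemma colon_module_coeff: "v \<in> colon_module \<Longrightarrow> i < s \<Longrightarrow> coeff P (v i) d \<in> ideal_pow R I d \<cdot>\<^bsub>R\<^esub> K"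
  by (simp add: colon_module_def)

lemma colon_module_lift: "v \<in> colon_module \<Longrightarrow> \<exists>r. R.lifts J a s r (\<lambda>i. coeff P (v i) d)"
  by (simp add: colon_module_def)

lemma colon_module_smult:
  assumes t: "t \<in> rees_algebra I" and v: "v \<in> colon_module"
  shows "(\<lambda>i. t \<otimes>\<^bsub>P\<^esub> v i) \<in> colon_module"
proof -
  have T: "subring (rees_algebra I) P"
    by (rule rees_algebra_subring[OF gen_ideal])
  have tc: "t \<in> carrier P"
    using t by (simp add: rees_algebra_def)
  have tI: "coeff P t e \<in> ideal_pow R I e" for e
    using t by (simp add: rees_algebra_def)
  have vc: "v i \<in> carrier P" for i
    by (rule colon_module_carrier[OF v])
  have "(\<lambda>i. t \<otimes>\<^bsub>P\<^esub> v i) \<in> P.vecs (rees_algebra I) s"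
    using colon_module_vecs[OF v] t subringE(6)[OF T] tc unfolding P.vecs_def by auto
  moreover have "coeff P (t \<otimes>\<^bsub>P\<^esub> v i) d \<in> ideal_pow R I d \<cdot>\<^bsub>R\<^esub> K" if i: "i < s" for i d
  proof -
    have "coeff P t e \<otimes> coeff P (v i) (d - e) \<in> ideal_pow R I d \<cdot>\<^bsub>R\<^esub> K" if "e \<in> {..d}" for e
    proof -
      have "coeff P t e \<otimes> coeff P (v i) (d - e) \<in> ideal_pow R I (e + (d - e)) \<cdot>\<^bsub>R\<^esub> K"
        by (rule R.ideal_pow_mult_prod_mem[OF gen_ideal K tI colon_module_coeff[OF v i]])
      then show ?thesis
        using that by simp
    qed
    then have "(\<Oplus>e\<in>{..d}. coeff P t e \<otimes> coeff P (v i) (d - e)) \<in> ideal_pow R I d \<cdot>\<^bsub>R\<^esub> K"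
      by (intro R.ideal_finsum_closed[OF pow_prod_ideal]) auto
    then show ?thesis
      using tc vc by simp
  qed
  moreover have "\<exists>r. R.lifts J a s r (\<lambda>i. coeff P (t \<otimes>\<^bsub>P\<^esub> v i) d)" for d
  proof -
    obtain \<rho> where \<rho>: "\<And>e. R.lifts J a s (\<rho> e) (\<lambda>i. coeff P (v i) e)"
      using colon_module_lift[OF v] by metis
    have "R.lifts J a s (\<Oplus>e\<in>{..d}. coeff P t e \<otimes> \<rho> (d - e))
            (\<lambda>i. \<Oplus>e\<in>{..d}. coeff P t e \<otimes> coeff P (v i) (d - e))"
      using \<rho> tc vc by (intro R.lifts_finsum[OF J gens] R.lifts_smult[OF J gens]) auto
    then show ?thesis
      using tc vc by auto
  qed
  ultimately show ?thesis
    unfolding colon_module_def by blast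
qed

lemma colon_module_submodule: "P.vec_submodule (rees_algebra I) s colon_module"
  unfolding P.vec_submodule_def
proof (intro conjI ballI)
  have T: "subring (rees_algebra I) P"
    by (rule rees_algebra_subring[OF gen_ideal])
  show "colon_module \<subseteq> P.vecs (rees_algebra I) s"
    using colon_module_vecs by blast
  show "(\<lambda>_. \<zero>\<^bsub>P\<^esub>) \<in> colon_module"
    unfolding colon_module_def P.vecs_def
    using subringE(2)[OF T] R.lifts_zero[OF J gens] pow_prod_ideal
    by (auto simp: additive_subgroup.zero_closed ideal.axioms(1))
  show "(\<lambda>i. v i \<oplus>\<^bsub>P\<^esub> w i) \<in> colon_module" if v: "v \<in> colon_module" and w: "w \<in> colon_module" for v w
  proof -
    have "(\<lambda>i. v i \<oplus>\<^bsub>P\<^esub> w i) \<in> P.vecs (rees_algebra I) s"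
      using colon_module_vecs[OF v] colon_module_vecs[OF w] subringE(7)[OF T]
      unfolding P.vecs_def by auto
    moreover have "coeff P (v i \<oplus>\<^bsub>P\<^esub> w i) d \<in> ideal_pow R I d \<cdot>\<^bsub>R\<^esub> K" if "i < s" for i d
      using colon_module_coeff[OF v that] colon_module_coeff[OF w that]
        colon_module_carrier[OF v] colon_module_carrier[OF w] pow_prod_ideal
      by (simp add: additive_subgroup.a_closed ideal.axioms(1))
    moreover have "\<exists>r. R.lifts J a s r (\<lambda>i. coeff P (v i \<oplus>\<^bsub>P\<^esub> w i) d)" for d
    proof -
      obtain r r' where "R.lifts J a s r (\<lambda>i. coeff P (v i) d)" "R.lifts J a s r' (\<lambda>i. coeff P (w i) d)"
        using colon_module_lift[OF v] colon_module_lift[OF w] by blast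
      then have "R.lifts J a s (r \<oplus> r') (\<lambda>i. coeff P (v i) d \<oplus> coeff P (w i) d)"
        using colon_module_carrier[OF v] colon_module_carrier[OF w]
        by (intro R.lifts_add[OF J gens]) auto
      then show ?thesis
        using colon_module_carrier[OF v] colon_module_carrier[OF w] by auto
    qed
    ultimately show ?thesis
      unfolding colon_module_def by blast
  qed
  show "(\<lambda>i. t \<otimes>\<^bsub>P\<^esub> v i) \<in> colon_module" if "t \<in> rees_algebra I" "v \<in> colon_module" for t v
    using colon_module_smult that .
qed

lemma colon_module_term_mem:
  assumes g: "g \<in> colon_module" and deg: "\<And>i. i < s \<Longrightarrow> deg R (g i) \<le> m"
    and t: "t \<in> rees_algebra I" and e: "e \<le> Suc m"
    and \<rho>: "R.lifts J a s \<rho> (\<lambda>i. coeff P (g i) (Suc m - e))"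
  shows "coeff P t e \<otimes> \<rho> \<in> ideal_colon R J I <+>\<^bsub>R\<^esub> ideal_pow R I m \<cdot>\<^bsub>R\<^esub> K"
proof -
  have Ic: "I \<subseteq> carrier R"
    using ideal.Icarr[OF gen_ideal] by blast
  have colon: "ideal (ideal_colon R J I) R"
    by (rule R.ideal_colon_is_ideal[OF J Ic])
  have t_coeff: "coeff P t e \<in> ideal_pow R I e" "coeff P t e \<in> carrier R"
    using t ideal.Icarr[OF R.ideal_pow_is_ideal[OF gen_ideal]] by (auto simp: rees_algebra_def)
  have \<rho>c: "\<rho> \<in> carrier R"
    using \<rho> by (simp add: R.lifts_def)
  have J_colon: "J \<subseteq> ideal_colon R J I"
  proof
    fix x assume x: "x \<in> J"
    then show "x \<in> ideal_colon R J I"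
      using ideal.Icarr[OF J x] ideal.I_r_closed[OF J x] Ic unfolding ideal_colon_def by blast
  qed
  have zero: "\<zero> \<in> ideal_pow R I m \<cdot>\<^bsub>R\<^esub> K"
    using pow_prod_ideal by (simp add: additive_subgroup.zero_closed ideal.axioms(1))
  show ?thesis
  proof (cases e)
    case 0
    have "coeff P (g i) (Suc m) = \<zero>" if "i < s" for i
      using deg[OF that] colon_module_carrier[OF g] by (intro deg_aboveD) auto
    then have "R.lifts J a s \<rho> (\<lambda>_. \<zero>) = R.lifts J a s \<rho> (\<lambda>i. coeff P (g i) (Suc m - e))"
      using 0 by (intro R.lifts_cong) simp
    then have "R.lifts J a s \<rho> (\<lambda>_. \<zero>)"
      using \<rho> by simp
    then have "\<rho> \<in> ideal_colon R J I"
      unfolding I_def by (rule R.lifts_zero_mem_colon[OF J gens])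
    then have "coeff P t e \<otimes> \<rho> \<in> ideal_colon R J I"
      using ideal.I_l_closed[OF colon] t_coeff(2) by blast
    then show ?thesis
      using zero ideal.Icarr[OF colon] by (intro R.subset_set_add_left[THEN subsetD]) auto
  next
    case (Suc e')
    have "\<rho> \<in> ideal_colon R (J <+>\<^bsub>R\<^esub> ideal_pow R I (Suc m - e) \<cdot>\<^bsub>R\<^esub> K) I"
      unfolding I_def
      by (rule R.mem_colon_sum_of_lifts[OF J gens pow_prod_ideal[unfolded I_def]
            colon_module_coeff[OF g, unfolded I_def] \<rho>])
    then have "coeff P t e \<otimes> \<rho> \<in> J <+>\<^bsub>R\<^esub> ideal_pow R I (Suc m - e + e') \<cdot>\<^bsub>R\<^esub> K"
      using t_coeff(1) Suc by (intro R.ideal_colon_sum_pow_mult[OF gen_ideal J K]) auto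
    moreover have "Suc m - e + e' = m"
      using Suc e by simp
    ultimately show ?thesis
      using R.set_add_mono_left[OF J_colon] by auto
  qed
qed

lemma colon_module_monom:
  assumes k: "\<And>i. i < s \<Longrightarrow> k i \<in> ideal_pow R I (Suc m) \<cdot>\<^bsub>R\<^esub> K" and r: "R.lifts J a s r k"
  shows "(\<lambda>i. if i < s then monom P (k i) (Suc m) else \<zero>\<^bsub>P\<^esub>) \<in> colon_module"
    (is "?v \<in> _")
proof -
  have kc: "k i \<in> carrier R" if "i < s" for i
    using k[OF that] ideal.Icarr[OF pow_prod_ideal] by blast
  have v_coeff: "coeff P (?v i) d = (if d = Suc m then k i else \<zero>)" if "i < s" for i d
    using that kc by simp
  have "k i \<in> ideal_pow R I (Suc m)" if "i < s" for i
    using k[OF that] R.ideal_prod_inter[OF R.ideal_pow_is_ideal[OF gen_ideal] K] by blast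
  then have "?v \<in> P.vecs (rees_algebra I) s"
    unfolding P.vecs_def using monom_in_rees_algebra[OF gen_ideal] by auto
  moreover have "coeff P (?v i) d \<in> ideal_pow R I d \<cdot>\<^bsub>R\<^esub> K" if "i < s" for i d
    using k[OF that] pow_prod_ideal v_coeff[OF that]
    by (simp add: additive_subgroup.zero_closed ideal.axioms(1))
  moreover have "\<exists>r. R.lifts J a s r (\<lambda>i. coeff P (?v i) d)" for d
  proof -
    have "R.lifts J a s (if d = Suc m then r else \<zero>) (\<lambda>i. if d = Suc m then k i else \<zero>)"
      using r R.lifts_zero[OF J gens] by simp
    moreover have "R.lifts J a s (if d = Suc m then r else \<zero>) (\<lambda>i. if d = Suc m then k i else \<zero>)
                     = R.lifts J a s (if d = Suc m then r else \<zero>) (\<lambda>i. coeff P (?v i) d)"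
      using v_coeff by (intro R.lifts_cong) simp
    ultimately show ?thesis
      by blast
  qed
  ultimately show ?thesis
    unfolding colon_module_def by blast
qed

lemma lifts_coeff_combination:
  assumes F: "finite F" "F \<subseteq> colon_module" and c: "c \<in> F \<rightarrow> rees_algebra I"
    and \<rho>: "\<And>g d. g \<in> F \<Longrightarrow> R.lifts J a s (\<rho> g d) (\<lambda>i. coeff P (g i) d)"
  shows "R.lifts J a s (\<Oplus>g\<in>F. \<Oplus>e\<in>{..n}. coeff P (c g) e \<otimes> \<rho> g (n - e))
           (\<lambda>i. coeff P (\<Oplus>\<^bsub>P\<^esub>g\<in>F. c g \<otimes>\<^bsub>P\<^esub> g i) n)"
proof -
  have cc: "c g \<in> carrier P" if "g \<in> F" for g
    using c that by (auto simp: rees_algebra_def)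
  have gc: "g i \<in> carrier P" if "g \<in> F" for g i
    using F(2) that colon_module_carrier by blast
  have "R.lifts J a s (\<Oplus>e\<in>{..n}. coeff P (c g) e \<otimes> \<rho> g (n - e))
      (\<lambda>i. \<Oplus>e\<in>{..n}. coeff P (c g) e \<otimes> coeff P (g i) (n - e))" if g: "g \<in> F" for g
    using \<rho>[OF g] cc[OF g] gc[OF g] by (intro R.lifts_finsum[OF J gens] R.lifts_smult[OF J gens]) auto
  then have "R.lifts J a s (\<Oplus>g\<in>F. \<Oplus>e\<in>{..n}. coeff P (c g) e \<otimes> \<rho> g (n - e))
      (\<lambda>i. \<Oplus>g\<in>F. \<Oplus>e\<in>{..n}. coeff P (c g) e \<otimes> coeff P (g i) (n - e))"
    by (rule R.lifts_finsum[OF J gens F(1)]) (use cc gc in \<open>auto intro!: R.finsum_closed\<close>)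
  moreover have "coeff P (\<Oplus>\<^bsub>P\<^esub>g\<in>F. c g \<otimes>\<^bsub>P\<^esub> g i) n
      = (\<Oplus>g\<in>F. \<Oplus>e\<in>{..n}. coeff P (c g) e \<otimes> coeff P (g i) (n - e))" for i
    using F(1) cc gc by (rule coeff_finsum_mult)
  ultimately show ?thesis
    by simp
qed

lemma colon_sum_pow_subset_of_generators:
  assumes F: "finite F" "F \<subseteq> colon_module" "colon_module \<subseteq> P.vec_span (rees_algebra I) F"
    and deg: "\<And>g i. g \<in> F \<Longrightarrow> i < s \<Longrightarrow> deg R (g i) \<le> m"
  shows "ideal_colon R (J <+>\<^bsub>R\<^esub> ideal_pow R I (Suc m) \<cdot>\<^bsub>R\<^esub> K) I
           \<subseteq> ideal_colon R J I <+>\<^bsub>R\<^esub> ideal_pow R I m \<cdot>\<^bsub>R\<^esub> K"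
    (is "_ \<subseteq> ?Z")
proof
  fix r assume r: "r \<in> ideal_colon R (J <+>\<^bsub>R\<^esub> ideal_pow R I (Suc m) \<cdot>\<^bsub>R\<^esub> K) I"
  have Ic: "I \<subseteq> carrier R"
    using ideal.Icarr[OF gen_ideal] by blast
  have Z: "ideal ?Z R"
    by (intro R.add_ideals R.ideal_colon_is_ideal[OF J Ic] pow_prod_ideal)
  obtain k where k: "\<And>i. i < s \<Longrightarrow> k i \<in> ideal_pow R I (Suc m) \<cdot>\<^bsub>R\<^esub> K" and r_k: "R.lifts J a s r k"
    using R.lifts_of_mem_colon_sum[OF J gens pow_prod_ideal[unfolded I_def] r[unfolded I_def]]
    unfolding I_def by blast
  have kc: "k i \<in> carrier R" if "i < s" for i
    using k[OF that] ideal.Icarr[OF pow_prod_ideal] by blast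
  obtain c where c: "c \<in> F \<rightarrow> rees_algebra I"
    and v: "(\<lambda>i. if i < s then monom P (k i) (Suc m) else \<zero>\<^bsub>P\<^esub>) = (\<lambda>i. \<Oplus>\<^bsub>P\<^esub>g\<in>F. c g \<otimes>\<^bsub>P\<^esub> g i)"
    using colon_module_monom[OF k r_k] F(3) unfolding P.vec_span_def by blast
  define \<rho> where "\<rho> g d = (SOME \<rho>. R.lifts J a s \<rho> (\<lambda>i. coeff P (g i) d))" for g d
  have \<rho>: "R.lifts J a s (\<rho> g d) (\<lambda>i. coeff P (g i) d)" if "g \<in> F" for g d
  proof -
    have "\<exists>\<rho>. R.lifts J a s \<rho> (\<lambda>i. coeff P (g i) d)"
      using F(2) that by (intro colon_module_lift) blast
    then show ?thesis
      unfolding \<rho>_def by (rule someI_ex)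
  qed
  define r' where "r' = (\<Oplus>g\<in>F. \<Oplus>e\<in>{..Suc m}. coeff P (c g) e \<otimes> \<rho> g (Suc m - e))"
  have "R.lifts J a s r' (\<lambda>i. coeff P (\<Oplus>\<^bsub>P\<^esub>g\<in>F. c g \<otimes>\<^bsub>P\<^esub> g i) (Suc m))"
    unfolding r'_def by (rule lifts_coeff_combination[OF F(1,2) c \<rho>])
  moreover have "coeff P (\<Oplus>\<^bsub>P\<^esub>g\<in>F. c g \<otimes>\<^bsub>P\<^esub> g i) (Suc m) = k i" if "i < s" for i
  proof -
    have "(\<Oplus>\<^bsub>P\<^esub>g\<in>F. c g \<otimes>\<^bsub>P\<^esub> g i) = monom P (k i) (Suc m)"
      using fun_cong[OF v, of i] that by simp
    then show ?thesis
      using kc[OF that] by simp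
  qed
  ultimately have "R.lifts J a s r' k"
    using R.lifts_cong[of s "\<lambda>i. coeff P (\<Oplus>\<^bsub>P\<^esub>g\<in>F. c g \<otimes>\<^bsub>P\<^esub> g i) (Suc m)" k] by simp
  then have "r \<ominus> r' \<in> ideal_colon R J I"
    unfolding I_def using r_k kc by (intro R.lifts_diff_mem_colon[OF J gens])
  then have "r \<ominus> r' \<in> ?Z"
    using pow_prod_ideal ideal.Icarr[OF R.ideal_colon_is_ideal[OF J Ic]]
    by (intro R.subset_set_add_left[THEN subsetD]) (auto simp: additive_subgroup.zero_closed ideal.axioms(1))
  moreover have "coeff P (c g) e \<otimes> \<rho> g (Suc m - e) \<in> ?Z" if "g \<in> F" "e \<in> {..Suc m}" for g e
    using F(2) deg c \<rho> that by (intro colon_module_term_mem) auto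
  then have "r' \<in> ?Z"
    unfolding r'_def by (intro R.ideal_finsum_closed[OF Z] F(1)) auto
  moreover have "r = (r \<ominus> r') \<oplus> r'"
    using r_k ideal.Icarr[OF Z \<open>r' \<in> ?Z\<close>] unfolding R.lifts_def by algebra
  ultimately show "r \<in> ?Z"
    using additive_subgroup.a_closed[OF ideal.axioms(1)[OF Z]] by metis
qed

lemma colon_sum_pow_subset_eventually:
  assumes noeth: "noetherian_ring R"
  obtains D where "\<And>m. D \<le> m \<Longrightarrow>
    ideal_colon R (J <+>\<^bsub>R\<^esub> ideal_pow R I (Suc m) \<cdot>\<^bsub>R\<^esub> K) I
      \<subseteq> ideal_colon R J I <+>\<^bsub>R\<^esub> ideal_pow R I m \<cdot>\<^bsub>R\<^esub> K"
proof -
  have T: "subring (rees_algebra I) P"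
    by (rule rees_algebra_subring[OF gen_ideal])
  have "noetherian_ring (P\<lparr>carrier := rees_algebra I\<rparr>)"
    unfolding I_def using gens by (intro noetherian_rees_algebra[OF noeth]) auto
  then obtain F where F: "finite F" "F \<subseteq> colon_module" "colon_module \<subseteq> P.vec_span (rees_algebra I) F"
    using P.vec_submodule_finitely_generated[OF T _ colon_module_submodule] by blast
  define D where "D = Max ((\<lambda>(g, i). deg R (g i)) ` (F \<times> {..<s}))"
  have deg: "deg R (g i) \<le> D" if "g \<in> F" "i < s" for g i
  proof -
    have "deg R (g i) \<in> (\<lambda>(g, i). deg R (g i)) ` (F \<times> {..<s})"
      using that by (intro image_eqI[of _ _ "(g, i)"]) auto
    then show ?thesis
      unfolding D_def using F(1) by (intro Max_ge) auto
  qed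
  show thesis
  proof (rule that)
    fix m assume "D \<le> m"
    then have "deg R (g i) \<le> m" if "g \<in> F" "i < s" for g i
      using deg[OF that] by linarith
    then show "ideal_colon R (J <+>\<^bsub>R\<^esub> ideal_pow R I (Suc m) \<cdot>\<^bsub>R\<^esub> K) I
      \<subseteq> ideal_colon R J I <+>\<^bsub>R\<^esub> ideal_pow R I m \<cdot>\<^bsub>R\<^esub> K"
      by (rule colon_sum_pow_subset_of_generators[OF F])
  qed
qed

end

end

theorem corollary2p6:
  fixes R :: "('a, 'b) ring_scheme" and I J K :: "'a set"
  assumes "cring R" and "noetherian_ring R"
    and "ideal I R" and "ideal J R" and "ideal K R"
  shows "\<exists>t::nat. t > 0 \<and> (\<forall>n\<ge>t.
     ideal_colon R (J <+>\<^bsub>R\<^esub> ideal_prod R (ideal_pow R I n) K) I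
       = ideal_colon R J I <+>\<^bsub>R\<^esub> ideal_prod R (ideal_pow R I (n - 1)) K)"
proof -
  interpret cring R
    by (rule assms(1))
  have U: "UP_cring R"
    unfolding UP_cring_def by (rule assms(1))
  obtain A where A: "A \<subseteq> carrier R" "finite A" "I = Idl\<^bsub>R\<^esub> A"
    using noetherian_ring.finetely_gen[OF assms(2,3)] by blast
  obtain s :: nat and a where "A = a ` {i. i < s}"
    using finite_imp_nat_seg_image_inj_on[OF A(2)] by blast
  then have gens: "a ` {..<s} \<subseteq> carrier R" and I: "I = Idl\<^bsub>R\<^esub> (a ` {..<s})"
    using A by (auto simp: lessThan_def)
  obtain D where D: "\<And>m. D \<le> m \<Longrightarrow>
      ideal_colon R (J <+>\<^bsub>R\<^esub> ideal_prod R (ideal_pow R I (Suc m)) K) I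
        \<subseteq> ideal_colon R J I <+>\<^bsub>R\<^esub> ideal_prod R (ideal_pow R I m) K"
    using UP_cring.colon_sum_pow_subset_eventually[OF U assms(4,5) gens I assms(2)] by blast
  show ?thesis
  proof (intro exI[of _ "Suc D"] conjI allI impI)
    fix n assume "Suc D \<le> n"
    then obtain m where m: "n = Suc m" "D \<le> m"
      by (cases n) auto
    show "ideal_colon R (J <+>\<^bsub>R\<^esub> ideal_prod R (ideal_pow R I n) K) I
        = ideal_colon R J I <+>\<^bsub>R\<^esub> ideal_prod R (ideal_pow R I (n - 1)) K"
      using D[OF m(2)] ideal_colon_sum_pow_superset[OF assms(3-5), of m] m(1) by auto
  qed simp
qed

end
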